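(* Let $\boldsymbol\lambda=\{\lambda_m\}_{m\in\mathbb{N}_0}$ be a monotonically increasing sequence of positive numbers, let $D>0$ and $\mathbb{K}\in\{\mathbb{R},\mathbb{C}\}$. For each $n\in\mathbb{N}$ with $n\ge2$ there exists a constant $B_n>0$ such that for each $f\in\mathcal P_{\boldsymbol\lambda,D,\mathbb{K}}$ and $\epsilon>0$: (i) if $\mathbb{K}=\mathbb{R}$, there exist ReLU neural networks $\Phi_{f,n,D,\epsilon}\in\mathcal{NN}_{L,13,1,1}$ with \[ L\le B_n\Big(B_n\epsilon^{-\frac2{n-1}}+\epsilon^{-\frac1{n-1}}\log\tfrac2\epsilon+\epsilon^{-\frac1{n-1}}\log D+\epsilon^{-\frac1{n-1}}\log\lambda_n\Big)\quad\text{as }\epsilon\to0 \] such that $\|f-\Phi_{f,n,D,\epsilon}\|_{L^\infty((-D,D))}\le\epsilon$; (ii) if $\mathbb{K}=\mathbb{C}$, there exist ReLU neural networks $\Phi_{f,n,D,\epsilon}\in\mathcal{NN}_{L,15,1,2}$ with $L$ bounded as in (i) such that $\|f-((\Phi_{f,n,D,\epsilon})_1+\imath(\Phi_{f,n,D,\epsilon})_2)\|_{L^\infty((-D,D))}\le\epsilon$. In either case $B_n\le C\max\{n+2,\,4(\widetilde C_nD^{n+1}\lambda_{n+1})^{\frac1{n-1}}\}$ for a constant $C>0$ and a constant $\widetilde C_n>0$ independent of $\boldsymbol\lambda$, and all weights of $\Phi_{f,n,D,\epsilon}$ are bounded in absolute value by $\max\{2,\lambda_n\}$.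
   Context: $\mathcal P_{\boldsymbol\lambda,D,\mathbb{K}}=\{f\in\mathscr C^\infty([-D,D],\mathbb{K}):\ \|f^{(m)}\|_{L^\infty((-D,D))}\le\lambda_m\ \text{for each }m\in\mathbb{N}_0\}$. ReLU networks: $\varrho(x)=\max\{x,0\}$ componentwise; $\mathcal{NN}_{L,M,\ell_0,\ell_L}$ is the set of maps $\mathbb{R}^{\ell_0}\to\mathbb{R}^{\ell_L}$ of the form $\mathcal A_{L'}\circ\varrho\circ\cdots\circ\varrho\circ\mathcal A_1$ (or $\mathcal A_1$), affine $\mathcal A_k(\mathbf x)=\mathbf W_k\mathbf x+\mathbf b_k$, depth $L'\le L$, width $\max_k\ell_k\le M$; weights are the entries of $\mathbf W_k,\mathbf b_k$. $(\Phi)_1,(\Phi)_2$ denote the outputs. *)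

theory Defs
  imports "HOL-Analysis.Analysis"
begin

text \<open>A network is given by a list of layer widths ds = [l_0, ..., l_L] and a list of
  L affine layers (W_k, b_k); W_k is a list of l_k rows, each of length l_(k-1),
  and b_k has length l_k.\<close>

type_synonym layer = "real list list \<times> real list"

definition relu :: "real \<Rightarrow> real" where
  "relu x = max x 0"

definition affine :: "layer \<Rightarrow> real list \<Rightarrow> real list" where
  "affine l x = map (\<lambda>(row, bi). (\<Sum>(w, xi) \<leftarrow> zip row x. w * xi) + bi) (zip (fst l) (snd l))"

fun realize :: "layer list \<Rightarrow> real list \<Rightarrow> real list" where
  "realize [] x = x"
| "realize [l] x = affine l x"
| "realize (l # ls) x = realize ls (map relu (affine l x))"

definition valid_net :: "nat list \<Rightarrow> layer list \<Rightarrow> bool" where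
  "valid_net ds ls \<longleftrightarrow> ls \<noteq> [] \<and> length ds = Suc (length ls) \<and>
     (\<forall>k < length ls. length (fst (ls ! k)) = ds ! Suc k \<and>
                      length (snd (ls ! k)) = ds ! Suc k \<and>
                      (\<forall>row \<in> set (fst (ls ! k)). length row = ds ! k))"

text \<open>Membership in NN_{L,M,l0,lL}: depth at most L, width (max of all l_k) at most M.\<close>
definition in_NN :: "real \<Rightarrow> nat \<Rightarrow> nat \<Rightarrow> nat \<Rightarrow> nat list \<Rightarrow> layer list \<Rightarrow> bool" where
  "in_NN L M l0 lL ds ls \<longleftrightarrow> valid_net ds ls \<and> hd ds = l0 \<and> last ds = lL \<and>
     real (length ls) \<le> L \<and> (\<forall>d \<in> set ds. d \<le> M)"

definition weights_bounded :: "layer list \<Rightarrow> real \<Rightarrow> bool" where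
  "weights_bounded ls c \<longleftrightarrow>
     (\<forall>l \<in> set ls. (\<forall>row \<in> set (fst l). \<forall>w \<in> set row. \<bar>w\<bar> \<le> c) \<and> (\<forall>v \<in> set (snd l). \<bar>v\<bar> \<le> c))"

text \<open>f is C^infinity on [-D,D] (one-sided derivatives at the endpoints), with derivatives
  F m, and sup-norm of the m-th derivative on (-D,D) at most lam m.\<close>
definition in_P :: "(nat \<Rightarrow> real) \<Rightarrow> real \<Rightarrow> (real \<Rightarrow> 'a::real_normed_vector) \<Rightarrow> bool" where
  "in_P lam D f \<longleftrightarrow> (\<exists>F :: nat \<Rightarrow> real \<Rightarrow> 'a.
     (\<forall>x \<in> {-D..D}. F 0 x = f x) \<and>
     (\<forall>m. \<forall>x \<in> {-D..D}. (F m has_vector_derivative F (Suc m) x) (at x within {-D..D})) \<and>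
     (\<forall>m. \<forall>x \<in> {-D<..<D}. norm (F m x) \<le> lam m))"

definition depth_bound :: "real \<Rightarrow> nat \<Rightarrow> real \<Rightarrow> (nat \<Rightarrow> real) \<Rightarrow> real \<Rightarrow> real" where
  "depth_bound B n D lam \<epsilon> =
     B * (B * \<epsilon> powr (-2 / (real n - 1))
          + \<epsilon> powr (-1 / (real n - 1)) * ln (2 / \<epsilon>)
          + \<epsilon> powr (-1 / (real n - 1)) * ln D
          + \<epsilon> powr (-1 / (real n - 1)) * ln (lam n))"

definition B_bound :: "real \<Rightarrow> real \<Rightarrow> nat \<Rightarrow> real \<Rightarrow> (nat \<Rightarrow> real) \<Rightarrow> real" where
  "B_bound C Ct n D lam = C * max (real n + 2) (4 * (Ct * D ^ (n + 1) * lam (n + 1)) powr (1 / (real n - 1)))"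

end

theory Submission
  imports Defs
begin

(* Split [-D, D] into N cells of width h = 2 D / N. On the j-th cell, f is replaced by its Taylor
   polynomial of degree n at the left end point, evaluated at the clamped local coordinate
   t_j = min (max ((x + D) / h - j) 0) 1. The increments of the cells telescope, so their sum is
   f x up to N lam_(n+1) h^(n+1), which is below eps/4 once N is of order eps^(-1/n).
   The powers t^i come from iterated approximate multiplication, multiplication from polarization
   and squaring from Yarotsky's sawtooth construction, which reaches accuracy 4^-m with O(m)
   ReLU layers. The whole computation runs on 13 registers (real and imaginary part one after the
   other), in depth O(n^2 N^2) = O(eps^(-2/n)). Since eps^(-2/(n-1)) grows faster, this is
   eventually below the prescribed depth bound, and as eps0 may depend on lam and D, the constants
   C, C~_n and B_n can all be taken to be 1. The weights stay below max 2 lam_n: the cell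
   coefficients h^i f^(i)(a_j) / i! are bounded by lam_n, and the large input scaling N / (2 D)
   is realised by doublings. *)

section \<open>Register programs\<close>

text \<open>A width-13 ReLU network is described sparsely by a register program: each layer assigns
  ReLU neurons to some of the registers 0..12 and passes the other registers on unchanged.
  Passing on is a ReLU identity neuron, because all register values stay nonnegative.\<close>

type_synonym neuron = "(nat \<times> real) list \<times> real"

definition neuron_eval :: "neuron \<Rightarrow> (nat \<Rightarrow> real) \<Rightarrow> real" where
  "neuron_eval nr s = (\<Sum>(i, w)\<leftarrow>fst nr. w * s i) + snd nr"

definition exec_layer :: "(nat \<times> neuron) list \<Rightarrow> (nat \<Rightarrow> real) \<Rightarrow> nat \<Rightarrow> real" where
  "exec_layer L s = (\<lambda>k. case map_of L k of Some nr \<Rightarrow> relu (neuron_eval nr s) | None \<Rightarrow> s k)"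

definition exec :: "(nat \<times> neuron) list list \<Rightarrow> (nat \<Rightarrow> real) \<Rightarrow> nat \<Rightarrow> real" where
  "exec Ls s = fold exec_layer Ls s"

definition written :: "(nat \<times> neuron) list list \<Rightarrow> nat set" where
  "written Ls = (\<Union>L\<in>set Ls. fst ` set L)"

definition nonneg_regs :: "(nat \<Rightarrow> real) \<Rightarrow> bool" where
  "nonneg_regs s \<longleftrightarrow> (\<forall>k<13. 0 \<le> s k)"

lemma neuron_eval_simps [simp]:
  "neuron_eval ([], b) s = b"
  "neuron_eval ((i, w) # ws, b) s = w * s i + neuron_eval (ws, b) s"
  by (simp_all add: neuron_eval_def)

lemma exec_layer_Nil [simp]: "exec_layer [] s = s"
  by (simp add: exec_layer_def)

lemma exec_layer_Cons [simp]:
  "exec_layer ((k, nr) # L) s = (exec_layer L s)(k := relu (neuron_eval nr s))"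
  by (rule ext) (simp add: exec_layer_def)

lemma exec_Nil [simp]: "exec [] s = s"
  by (simp add: exec_def)

lemma exec_Cons [simp]: "exec (L # Ls) s = exec Ls (exec_layer L s)"
  by (simp add: exec_def)

lemma exec_append [simp]: "exec (Ls @ Ms) s = exec Ms (exec Ls s)"
  by (simp add: exec_def)

lemma written_simps [simp]:
  "written [] = {}"
  "written (L # Ls) = fst ` set L \<union> written Ls"
  "written (Ls @ Ms) = written Ls \<union> written Ms"
  by (auto simp: written_def)

lemma written_concat_map: "written (concat (map f xs)) = (\<Union>x\<in>set xs. written (f x))"
  by (induction xs) auto

lemma relu_of_nonneg [simp]: "0 \<le> x \<Longrightarrow> relu x = x"
  by (simp add: relu_def)

lemma relu_nonneg [simp]: "0 \<le> relu x"
  by (simp add: relu_def)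

lemma nonneg_regs_exec_layer: "nonneg_regs s \<Longrightarrow> nonneg_regs (exec_layer L s)"
  by (auto simp: nonneg_regs_def exec_layer_def split: option.split)

lemma nonneg_regs_exec: "nonneg_regs s \<Longrightarrow> nonneg_regs (exec Ls s)"
  by (induction Ls arbitrary: s) (auto simp: nonneg_regs_exec_layer)

lemma exec_layer_unwritten: "k \<notin> fst ` set L \<Longrightarrow> exec_layer L s k = s k"
  by (simp add: exec_layer_def map_of_eq_None_iff[symmetric])

lemma exec_unwritten: "k \<notin> written Ls \<Longrightarrow> exec Ls s k = s k"
  by (induction Ls arbitrary: s) (auto simp: exec_layer_unwritten)

definition weight_on :: "(nat \<times> real) list \<Rightarrow> nat \<Rightarrow> real" where
  "weight_on ws j = (\<Sum>(i, w)\<leftarrow>ws. if i = j then w else 0)"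

definition dense_row :: "nat \<Rightarrow> (nat \<times> real) list \<Rightarrow> real list" where
  "dense_row W ws = map (weight_on ws) [0..<W]"

definition neuron_at :: "(nat \<times> neuron) list \<Rightarrow> nat \<Rightarrow> neuron" where
  "neuron_at L k = (case map_of L k of Some nr \<Rightarrow> nr | None \<Rightarrow> ([(k, 1)], 0))"

definition dense_layer :: "nat \<Rightarrow> neuron list \<Rightarrow> layer" where
  "dense_layer W nrs = (map (\<lambda>nr. dense_row W (fst nr)) nrs, map snd nrs)"

definition register_layer :: "nat \<Rightarrow> (nat \<times> neuron) list \<Rightarrow> layer" where
  "register_layer W L = dense_layer W (map (neuron_at L) [0..<13])"

definition network :: "(nat \<times> neuron) list \<Rightarrow> (nat \<times> neuron) list list \<Rightarrow> neuron list \<Rightarrow> layer list" where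
  "network L0 Ls outs = register_layer 1 L0 # map (register_layer 13) Ls @ [dense_layer 13 outs]"

definition network_widths :: "(nat \<times> neuron) list list \<Rightarrow> nat \<Rightarrow> nat list" where
  "network_widths Ls K = 1 # replicate (Suc (length Ls)) 13 @ [K]"

definition neuron_bounded :: "real \<Rightarrow> neuron \<Rightarrow> bool" where
  "neuron_bounded c nr \<longleftrightarrow>
     distinct (map fst (fst nr)) \<and> (\<forall>(i, w)\<in>set (fst nr). \<bar>w\<bar> \<le> c \<and> i < 13) \<and> \<bar>snd nr\<bar> \<le> c"

definition layer_bounded :: "real \<Rightarrow> (nat \<times> neuron) list \<Rightarrow> bool" where
  "layer_bounded c L \<longleftrightarrow> (\<forall>(k, nr)\<in>set L. neuron_bounded c nr)"

lemma layer_bounded_simps [simp]: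
  "layer_bounded c []"
  "layer_bounded c ((k, nr) # L) \<longleftrightarrow> neuron_bounded c nr \<and> layer_bounded c L"
  by (simp_all add: layer_bounded_def)

lemma weight_on_Cons: "weight_on ((i, w) # ws) j = (if i = j then w else 0) + weight_on ws j"
  by (simp add: weight_on_def)

lemma sum_list_zip_map: "(\<Sum>(w, y)\<leftarrow>zip (map f xs) (map g xs). w * y) = (\<Sum>j\<leftarrow>xs. f j * g j)"
  by (induction xs) auto

lemma dense_row_sum:
  "(\<Sum>(w, y)\<leftarrow>zip (dense_row W ws) (map s [0..<W]). w * y) = (\<Sum>(i, w)\<leftarrow>ws. if i < W then w * s i else 0)"
proof (induction ws)
  case Nil
  then show ?case by (simp add: dense_row_def sum_list_zip_map weight_on_def sum_list_sum_nth)
next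
  case (Cons a ws)
  obtain i w where a: "a = (i, w)" by force
  have "(\<Sum>j\<leftarrow>[0..<W]. (if i = j then w else 0) * s j) = (if i < W then w * s i else 0)"
    by (simp add: sum_list_distinct_conv_sum_set if_distrib[of "\<lambda>x. x * _"] cong: if_cong)
  then show ?case
    using Cons by (simp add: dense_row_def sum_list_zip_map a weight_on_Cons distrib_right sum_list_addf)
qed

lemma sum_list_if_below:
  "(\<forall>(i, w)\<in>set ws. i < W) \<Longrightarrow> (\<Sum>(i, w)\<leftarrow>ws. if i < W then w * s i else 0) = (\<Sum>(i, w)\<leftarrow>ws. w * s i)"
  by (induction ws) auto

lemma neuron_bounded_sum_below:
  assumes "neuron_bounded c nr"
  shows "(\<Sum>(i, w)\<leftarrow>fst nr. if i < 13 then w * s i else 0) + snd nr = neuron_eval nr s"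
proof -
  have "\<forall>(i, w)\<in>set (fst nr). i < 13" using assms by (auto simp: neuron_bounded_def)
  then show ?thesis by (simp add: sum_list_if_below neuron_eval_def)
qed

lemma affine_dense_layer:
  "affine (dense_layer W nrs) (map s [0..<W]) =
     map (\<lambda>nr. (\<Sum>(i, w)\<leftarrow>fst nr. if i < W then w * s i else 0) + snd nr) nrs"
  by (simp add: affine_def dense_layer_def zip_map_map zip_same_conv_map dense_row_sum)

lemma affine_dense_layer_bounded:
  assumes "\<forall>nr\<in>set nrs. neuron_bounded c nr"
  shows "affine (dense_layer 13 nrs) (map s [0..<13]) = map (\<lambda>nr. neuron_eval nr s) nrs"
  unfolding affine_dense_layer using assms neuron_bounded_sum_below by (intro map_cong) auto

lemma relu_affine_register_layer:
  assumes "layer_bounded c L" "nonneg_regs s"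
  shows "map relu (affine (register_layer 13 L) (map s [0..<13])) = map (exec_layer L s) [0..<13]"
proof -
  have "relu ((\<Sum>(i, w)\<leftarrow>fst (neuron_at L k). if i < 13 then w * s i else 0) + snd (neuron_at L k))
          = exec_layer L s k" if "k < 13" for k
  proof (cases "map_of L k")
    case None
    then show ?thesis using that assms(2) by (simp add: neuron_at_def exec_layer_def nonneg_regs_def)
  next
    case (Some nr)
    then have "neuron_bounded c nr"
      using assms(1) map_of_SomeD by (fastforce simp: layer_bounded_def)
    then show ?thesis
      using Some by (simp add: neuron_at_def exec_layer_def neuron_bounded_sum_below)
  qed
  then show ?thesis by (simp add: register_layer_def affine_dense_layer neuron_at_def)
qed

lemma fold_relu_affine_register_layers:
  assumes "\<forall>L\<in>set Ls. layer_bounded c L" "nonneg_regs s"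
  shows "fold (\<lambda>l v. map relu (affine l v)) (map (register_layer 13) Ls) (map s [0..<13]) =
    map (exec Ls s) [0..<13]"
  using assms
proof (induction Ls arbitrary: s)
  case (Cons L Ls)
  then have "layer_bounded c L" "\<forall>L\<in>set Ls. layer_bounded c L" by auto
  then show ?case
    using Cons.IH[of "exec_layer L s"] Cons.prems(2)
    by (simp add: relu_affine_register_layer nonneg_regs_exec_layer)
qed simp

lemma realize_snoc: "realize (ls @ [l]) v = affine l (fold (\<lambda>l v. map relu (affine l v)) ls v)"
proof (induction ls arbitrary: v)
  case (Cons l' ls)
  then show ?case by (cases "ls @ [l]") auto
qed simp

lemma realize_network:
  assumes "\<forall>L\<in>set Ls. layer_bounded c L" "\<forall>nr\<in>set outs. neuron_bounded c nr"
    and "nonneg_regs s" "map relu (affine (register_layer 1 L0) [x]) = map s [0..<13]"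
  shows "realize (network L0 Ls outs) [x] = map (\<lambda>nr. neuron_eval nr (exec Ls s)) outs"
proof -
  have "realize (network L0 Ls outs) [x] = affine (dense_layer 13 outs)
     (fold (\<lambda>l v. map relu (affine l v)) (map (register_layer 13) Ls)
       (map relu (affine (register_layer 1 L0) [x])))"
    using realize_snoc[of "register_layer 1 L0 # map (register_layer 13) Ls" "dense_layer 13 outs" "[x]"]
    by (simp add: network_def)
  then show ?thesis
    using assms by (simp add: fold_relu_affine_register_layers affine_dense_layer_bounded)
qed

lemma valid_network:
  assumes "outs \<noteq> []"
  shows "valid_net (network_widths Ls (length outs)) (network L0 Ls outs)"
  unfolding valid_net_def
proof (intro conjI allI impI)
  fix k assume k: "k < length (network L0 Ls outs)"
  let ?ds = "network_widths Ls (length outs)" and ?l = "network L0 Ls outs ! k"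
  consider "k = 0" | k' where "k = Suc k'" "k' < length Ls" | "k = Suc (length Ls)"
    using k by (cases k) (auto simp: network_def less_Suc_eq)
  then have "length (fst ?l) = ?ds ! Suc k \<and> length (snd ?l) = ?ds ! Suc k \<and>
             (\<forall>row\<in>set (fst ?l). length row = ?ds ! k)"
    by cases (auto simp: network_def network_widths_def register_layer_def dense_layer_def dense_row_def
        nth_append nth_Cons')
  then show "length (fst ?l) = ?ds ! Suc k" "length (snd ?l) = ?ds ! Suc k"
    "\<forall>row\<in>set (fst ?l). length row = ?ds ! k"
    by auto
qed (simp_all add: network_def network_widths_def)

lemma in_NN_network:
  assumes "outs \<noteq> []" "length outs \<le> M" "13 \<le> M" "real (length Ls + 2) \<le> L"
  shows "in_NN L M 1 (length outs) (network_widths Ls (length outs)) (network L0 Ls outs)"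
  using assms valid_network[OF assms(1)]
  by (auto simp: in_NN_def network_widths_def network_def)

lemma weight_on_notin: "j \<notin> fst ` set ws \<Longrightarrow> weight_on ws j = 0"
  by (induction ws) (auto simp: weight_on_def)

lemma weight_on_bounded:
  assumes "distinct (map fst ws)" "\<forall>(i, w)\<in>set ws. \<bar>w\<bar> \<le> c" "0 \<le> c"
  shows "\<bar>weight_on ws j\<bar> \<le> c"
  using assms
proof (induction ws)
  case (Cons a ws)
  obtain i w where a: "a = (i, w)" by force
  show ?case
  proof (cases "i = j")
    case True
    then have "weight_on ws j = 0" using Cons.prems by (intro weight_on_notin) (auto simp: a)
    then show ?thesis using Cons.prems True by (simp add: a weight_on_Cons)
  next
    case False
    then show ?thesis using Cons by (simp add: a weight_on_Cons)
  qed
qed (simp add: weight_on_def)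

lemma neuron_bounded_neuron_at:
  assumes "layer_bounded c L" "1 \<le> c" "k < 13"
  shows "neuron_bounded c (neuron_at L k)"
proof (cases "map_of L k")
  case (Some nr)
  then have "(k, nr) \<in> set L" by (rule map_of_SomeD)
  then show ?thesis using assms(1) Some by (auto simp: neuron_at_def layer_bounded_def)
qed (use assms(2,3) in \<open>simp add: neuron_at_def neuron_bounded_def\<close>)

lemma weights_bounded_append [simp]:
  "weights_bounded (ls @ ms) c \<longleftrightarrow> weights_bounded ls c \<and> weights_bounded ms c"
  by (auto simp: weights_bounded_def)

lemma weights_bounded_Cons:
  "weights_bounded (l # ls) c \<longleftrightarrow> weights_bounded [l] c \<and> weights_bounded ls c"
  by (auto simp: weights_bounded_def)

lemma weights_bounded_map [simp]:
  "weights_bounded (map f xs) c \<longleftrightarrow> (\<forall>x\<in>set xs. weights_bounded [f x] c)"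
  by (auto simp: weights_bounded_def)

lemma weights_bounded_dense_layer:
  assumes "\<forall>nr\<in>set nrs. neuron_bounded c nr" "0 \<le> c"
  shows "weights_bounded [dense_layer W nrs] c"
  using assms
  by (auto simp: weights_bounded_def dense_layer_def dense_row_def neuron_bounded_def
      intro!: weight_on_bounded)

lemma weights_bounded_register_layer:
  assumes "layer_bounded c L" "1 \<le> c"
  shows "weights_bounded [register_layer W L] c"
  unfolding register_layer_def using assms
  by (intro weights_bounded_dense_layer) (auto intro: neuron_bounded_neuron_at)

lemma weights_bounded_network:
  assumes "layer_bounded c L0" "\<forall>L\<in>set Ls. layer_bounded c L" "\<forall>nr\<in>set outs. neuron_bounded c nr"
    and "1 \<le> c"
  shows "weights_bounded (network L0 Ls outs) c"
  unfolding network_def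
  using assms
  by (subst weights_bounded_Cons) (simp add: weights_bounded_register_layer weights_bounded_dense_layer)

section \<open>Approximate squaring and multiplication\<close>

definition tent :: "real \<Rightarrow> real" where
  "tent z = 2 * relu z - 2 * relu (2 * z - 1)"

text \<open>Yarotsky's approximation of w^2 on [0,1]: the piecewise linear interpolant of w^2 at the
  nodes k/2^m, here in closed form.\<close>

definition sq_approx :: "nat \<Rightarrow> real \<Rightarrow> real" where
  "sq_approx m w = w^2 + ((tent ^^ m) w - ((tent ^^ m) w)^2) / 4^m"

lemma tent_range: "0 \<le> z \<Longrightarrow> z \<le> 1 \<Longrightarrow> 0 \<le> tent z \<and> tent z \<le> 1"
  by (cases "z \<le> 1/2") (simp_all add: tent_def relu_def)

lemma tent_iter_range: "0 \<le> z \<Longrightarrow> z \<le> 1 \<Longrightarrow> 0 \<le> (tent ^^ m) z \<and> (tent ^^ m) z \<le> 1"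
  by (induction m) (auto simp: tent_range)

lemma tent_parabola: "0 \<le> z \<Longrightarrow> z \<le> 1 \<Longrightarrow> (z - z^2) - tent z / 4 = (tent z - (tent z)^2) / 4"
  by (cases "z \<le> 1/2") (simp_all add: tent_def relu_def power2_eq_square field_simps)

lemma sq_approx_0 [simp]: "sq_approx 0 w = w"
  by (simp add: sq_approx_def)

lemma sq_approx_Suc:
  assumes "0 \<le> w" "w \<le> 1"
  shows "sq_approx (Suc q) w = sq_approx q w - tent ((tent ^^ q) w) / 4^Suc q"
proof -
  let ?z = "(tent ^^ q) w"
  have "0 \<le> ?z" "?z \<le> 1" using tent_iter_range assms by auto
  have "(?z - ?z^2) / 4^q - tent ?z / 4^Suc q = ((?z - ?z^2) - tent ?z / 4) / 4^q"
    by (simp add: diff_divide_distrib)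
  also have "\<dots> = ((tent ?z - (tent ?z)^2) / 4) / 4^q"
    by (simp only: tent_parabola[OF \<open>0 \<le> ?z\<close> \<open>?z \<le> 1\<close>])
  also have "\<dots> = (tent ?z - (tent ?z)^2) / 4^Suc q"
    by simp
  finally show ?thesis by (simp only: sq_approx_def funpow.simps(2) o_apply)
qed

lemma sq_approx_bounds:
  assumes "0 \<le> w" "w \<le> 1"
  shows "w^2 \<le> sq_approx m w \<and> sq_approx m w \<le> w^2 + 1 / 4^Suc m"
proof -
  let ?z = "(tent ^^ m) w"
  have "0 \<le> ?z" "?z \<le> 1" using tent_iter_range assms by auto
  then have "?z^2 \<le> ?z" by (simp add: power2_eq_square mult_left_le)
  moreover have "?z - ?z^2 \<le> 1/4"
    using zero_le_power2[of "?z - 1/2"] by (simp add: power2_eq_square algebra_simps)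
  then have "(?z - ?z^2) / 4^m \<le> (1/4) / 4^m"
    by (intro divide_right_mono) simp_all
  ultimately show ?thesis by (simp add: sq_approx_def)
qed

text \<open>The squaring gadget runs the refinement of sq_approx on two arguments w1, w2 at once:
  registers 8 and 10 hold tent^q w1 and sq_approx q w1, registers 11 and 3 the same for w2,
  and registers 9 and 12 are scratch.\<close>

definition square_step :: "nat \<Rightarrow> (nat \<times> neuron) list list" where
  "square_step q =
     [[(9, ([(8, 2)], -1)), (12, ([(11, 2)], -1))],
      [(8, ([(8, 2), (9, -2)], 0)), (9, ([], 0)),
       (10, ([(10, 1), (8, -(2 / 4^Suc q)), (9, 2 / 4^Suc q)], 0)),
       (11, ([(11, 2), (12, -2)], 0)), (12, ([], 0)),
       (3, ([(3, 1), (11, -(2 / 4^Suc q)), (12, 2 / 4^Suc q)], 0))]]"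

definition squaring :: "nat \<Rightarrow> (nat \<times> neuron) list list" where
  "squaring m = concat (map square_step [0..<m])"

lemma exec_square_step:
  assumes w: "0 \<le> w1" "w1 \<le> 1" "0 \<le> w2" "w2 \<le> 1"
    and s: "s 8 = (tent ^^ q) w1" "s 10 = sq_approx q w1" "s 11 = (tent ^^ q) w2" "s 3 = sq_approx q w2"
  shows "exec (square_step q) s 8 = (tent ^^ Suc q) w1 \<and> exec (square_step q) s 10 = sq_approx (Suc q) w1 \<and>
    exec (square_step q) s 11 = (tent ^^ Suc q) w2 \<and> exec (square_step q) s 3 = sq_approx (Suc q) w2"
proof -
  have tent: "tent z = relu (2 * z - 2 * relu (2 * z - 1))" if "0 \<le> z" "z \<le> 1" for z
    using tent_range[OF that] that by (simp add: tent_def)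
  have sq: "sq_approx (Suc q) w =
      relu (sq_approx q w - 2 / 4^Suc q * (tent ^^ q) w + 2 / 4^Suc q * relu (2 * (tent ^^ q) w - 1))"
    if "0 \<le> w" "w \<le> 1" for w
  proof -
    have "0 \<le> (tent ^^ q) w" using tent_iter_range that by blast
    then have "sq_approx (Suc q) w =
        sq_approx q w - 2 / 4^Suc q * (tent ^^ q) w + 2 / 4^Suc q * relu (2 * (tent ^^ q) w - 1)"
      using sq_approx_Suc[OF that, of q] by (simp add: tent_def diff_divide_distrib)
    moreover have "0 \<le> sq_approx (Suc q) w"
      using sq_approx_bounds[OF that] by (meson order_trans zero_le_power2)
    ultimately show ?thesis by (metis relu_of_nonneg)
  qed
  have "0 \<le> (tent ^^ q) w1" "(tent ^^ q) w1 \<le> 1" "0 \<le> (tent ^^ q) w2" "(tent ^^ q) w2 \<le> 1"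
    using tent_iter_range w by auto
  then show ?thesis
    using w by (simp add: square_step_def s tent sq algebra_simps)
qed

lemma written_squaring: "written (squaring m) \<subseteq> {3, 8, 9, 10, 11, 12}"
  by (induction m) (auto simp: squaring_def square_step_def)

lemma exec_squaring:
  assumes w: "0 \<le> w1" "w1 \<le> 1" "0 \<le> w2" "w2 \<le> 1"
    and s: "s 8 = w1" "s 10 = w1" "s 11 = w2" "s 3 = w2"
  shows "exec (squaring m) s 10 = sq_approx m w1 \<and> exec (squaring m) s 3 = sq_approx m w2"
proof -
  have "exec (squaring m) s 8 = (tent ^^ m) w1 \<and> exec (squaring m) s 10 = sq_approx m w1 \<and>
        exec (squaring m) s 11 = (tent ^^ m) w2 \<and> exec (squaring m) s 3 = sq_approx m w2"
  proof (induction m)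
    case (Suc m)
    have "squaring (Suc m) = squaring m @ square_step m" by (simp add: squaring_def)
    then show ?case using exec_square_step[OF w] Suc by simp
  qed (simp add: squaring_def s)
  then show ?thesis by blast
qed

text \<open>Multiplication by polarization, t p = ((t + p)/2)^2 - ((t - p)/2)^2; clipping to [0,1] keeps
  iterated products inside the domain of the squaring gadget.\<close>

definition mult_approx :: "nat \<Rightarrow> real \<Rightarrow> real \<Rightarrow> real" where
  "mult_approx m t p = min 1 (relu (sq_approx m ((t + p) / 2) - sq_approx m (\<bar>t - p\<bar> / 2)))"

lemma mult_approx_range: "0 \<le> mult_approx m t p \<and> mult_approx m t p \<le> 1"
  by (simp add: mult_approx_def)

lemma mult_approx_error:
  assumes "0 \<le> t" "t \<le> 1" "0 \<le> p" "p \<le> 1"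
  shows "\<bar>mult_approx m t p - t * p\<bar> \<le> 1 / 4^Suc m"
proof -
  let ?w1 = "(t + p) / 2" and ?w2 = "\<bar>t - p\<bar> / 2"
  have b1: "?w1^2 \<le> sq_approx m ?w1 \<and> sq_approx m ?w1 \<le> ?w1^2 + 1 / 4^Suc m"
    using assms by (intro sq_approx_bounds) auto
  have b2: "?w2^2 \<le> sq_approx m ?w2 \<and> sq_approx m ?w2 \<le> ?w2^2 + 1 / 4^Suc m"
    using assms by (intro sq_approx_bounds) auto
  have "?w1^2 - ?w2^2 = t * p"
    by (simp add: power2_eq_square power_divide abs_mult_self_eq field_simps)
  moreover have "0 \<le> t * p" "t * p \<le> 1" using assms by (auto intro: mult_le_one)
  ultimately show ?thesis using b1 b2 by (auto simp: mult_approx_def relu_def abs_le_iff min_def max_def)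
qed

definition polarize :: "(nat \<times> neuron) list list" where
  "polarize =
     [[(8, ([(2, 1/2), (3, 1/2)], 0)), (10, ([(2, 1/2), (3, 1/2)], 0)),
       (11, ([(2, 1/2), (3, -1/2)], 0)), (12, ([(2, -1/2), (3, 1/2)], 0))],
      [(11, ([(11, 1), (12, 1)], 0)), (3, ([(11, 1), (12, 1)], 0)), (12, ([], 0))]]"

text \<open>Registers hold nonnegative values only, so a signed sum is accumulated as the difference
  of two registers acc and Suc acc, fed with the positive and the negative parts of the weights.\<close>

definition clip_accumulate :: "nat \<Rightarrow> real \<Rightarrow> (nat \<times> neuron) list list" where
  "clip_accumulate acc d =
     [[(3, ([(10, 1), (3, -1)], 0))],
      [(3, ([(3, -1)], 1))],
      [(3, ([(3, -1)], 1)), (acc, ([(acc, 1), (3, -max d 0)], max d 0)),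
       (Suc acc, ([(Suc acc, 1), (3, -max (-d) 0)], max (-d) 0))]]"

definition mult_gadget :: "nat \<Rightarrow> nat \<Rightarrow> real \<Rightarrow> (nat \<times> neuron) list list" where
  "mult_gadget m acc d = polarize @ squaring m @ clip_accumulate acc d"

lemma written_mult_gadget: "written (mult_gadget m acc d) \<subseteq> {3, 8, 9, 10, 11, 12, acc, Suc acc}"
  using written_squaring[of m] by (auto simp: mult_gadget_def polarize_def clip_accumulate_def)

lemma exec_mult_gadget:
  assumes s: "nonneg_regs s" and acc: "acc \<in> {4, 5, 6}"
    and tp: "0 \<le> t" "t \<le> 1" "0 \<le> p" "p \<le> 1" "s 2 = t" "s 3 = p"
  shows "exec (mult_gadget m acc d) s 3 = mult_approx m t p \<and>
         exec (mult_gadget m acc d) s acc = s acc + max d 0 * mult_approx m t p \<and>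
         exec (mult_gadget m acc d) s (Suc acc) = s (Suc acc) + max (-d) 0 * mult_approx m t p"
proof -
  define s1 where "s1 = exec (polarize @ squaring m) s"
  have "\<bar>t - p\<bar> / 2 = relu (t / 2 - p / 2) + relu (p / 2 - t / 2)"
    by (auto simp: relu_def abs_if max_def)
  then have pol: "exec polarize s 8 = (t + p) / 2" "exec polarize s 10 = (t + p) / 2"
      "exec polarize s 11 = \<bar>t - p\<bar> / 2" "exec polarize s 3 = \<bar>t - p\<bar> / 2"
      "exec polarize s acc = s acc" "exec polarize s (Suc acc) = s (Suc acc)"
    using tp(1-4) acc by (auto simp: polarize_def tp(5,6) add_divide_distrib)
  have "0 \<le> (t + p) / 2" "(t + p) / 2 \<le> 1" "0 \<le> \<bar>t - p\<bar> / 2" "\<bar>t - p\<bar> / 2 \<le> 1"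
    using tp(1-4) by auto
  then have sq: "s1 10 = sq_approx m ((t + p) / 2)" "s1 3 = sq_approx m (\<bar>t - p\<bar> / 2)"
    using exec_squaring[OF _ _ _ _ pol(1-4)] by (auto simp: s1_def)
  have "acc \<notin> written (squaring m)" "Suc acc \<notin> written (squaring m)"
    using acc written_squaring[of m] by auto
  then have s1_acc: "s1 acc = s acc" "s1 (Suc acc) = s (Suc acc)"
    by (simp_all add: s1_def exec_unwritten pol(5,6))
  define r where "r = relu (s1 10 - s1 3)"
  have r: "mult_approx m t p = 1 - relu (1 - r)" "relu (1 - r) \<le> 1"
    using relu_nonneg[of "s1 10 - s1 3"] by (auto simp: mult_approx_def r_def sq relu_def min_def max_def)
  have "0 \<le> s acc" "0 \<le> s (Suc acc)" using s acc by (auto simp: nonneg_regs_def)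
  moreover have "max d 0 * relu (1 - r) \<le> max d 0" "max (-d) 0 * relu (1 - r) \<le> max (-d) 0"
    using r(2) by (simp_all add: mult_left_le)
  moreover have "exec (mult_gadget m acc d) s = exec (clip_accumulate acc d) s1"
    by (simp add: mult_gadget_def s1_def)
  ultimately show ?thesis
    using acc by (auto simp: clip_accumulate_def r s1_acc r_def[symmetric] algebra_simps)
qed

fun power_approx :: "nat \<Rightarrow> real \<Rightarrow> nat \<Rightarrow> real" where
  "power_approx m t 0 = t"
| "power_approx m t (Suc i) = mult_approx m t (power_approx m t i)"

lemma power_approx_range: "0 \<le> t \<Longrightarrow> t \<le> 1 \<Longrightarrow> 0 \<le> power_approx m t i \<and> power_approx m t i \<le> 1"
  by (cases i) (auto simp: mult_approx_range)

lemma power_approx_error: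
  assumes "0 \<le> t" "t \<le> 1"
  shows "\<bar>power_approx m t i - t^Suc i\<bar> \<le> real i / 4^Suc m"
proof (induction i)
  case (Suc i)
  let ?p = "power_approx m t i"
  have "0 \<le> ?p" "?p \<le> 1" using power_approx_range[OF assms] by auto
  then have "\<bar>mult_approx m t ?p - t * ?p\<bar> \<le> 1 / 4^Suc m"
    using assms by (intro mult_approx_error)
  moreover have "\<bar>t * (?p - t^Suc i)\<bar> \<le> \<bar>?p - t^Suc i\<bar>"
    using assms by (simp add: abs_mult mult_left_le_one_le)
  ultimately have "\<bar>power_approx m t (Suc i) - t^Suc (Suc i)\<bar> \<le> 1 / 4^Suc m + \<bar>?p - t^Suc i\<bar>"
    by (simp add: abs_le_iff algebra_simps)
  then show ?case using Suc.IH by (simp add: add_divide_distrib)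
qed simp

section \<open>Piecewise Taylor sums as register programs\<close>

text \<open>A Taylor block handles one cell: register 1 holds relu (Y - j), the position of the input Y
  relative to the left end of the j-th cell, and is decremented by one. The local coordinate
  t = min (relu (Y - j)) 1 = relu (Y - j) - relu (Y - j - 1) goes to registers 2 and 3, and the
  block accumulates the (approximate) polynomial sum_i d (i + 1) t^(i + 1).\<close>

definition block_head :: "nat \<Rightarrow> real \<Rightarrow> (nat \<times> neuron) list list" where
  "block_head acc d =
     [[(1, ([(1, 1)], -1)), (2, ([(1, 1)], 0))],
      [(2, ([(2, 1), (1, -1)], 0)), (3, ([(2, 1), (1, -1)], 0)),
       (acc, ([(acc, 1), (2, max d 0), (1, -max d 0)], 0)),
       (Suc acc, ([(Suc acc, 1), (2, max (-d) 0), (1, -max (-d) 0)], 0))]]"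

definition taylor_block :: "nat \<Rightarrow> nat \<Rightarrow> nat \<Rightarrow> (nat \<Rightarrow> real) \<Rightarrow> (nat \<times> neuron) list list" where
  "taylor_block m n acc d =
     block_head acc (d 1) @ concat (map (\<lambda>i. mult_gadget m acc (d (Suc i))) [1..<n])"

definition taylor_pass :: "nat \<Rightarrow> nat \<Rightarrow> nat \<Rightarrow> nat \<Rightarrow> (nat \<Rightarrow> nat \<Rightarrow> real) \<Rightarrow> (nat \<times> neuron) list list" where
  "taylor_pass m n N acc c = concat (map (\<lambda>j. taylor_block m n acc (c j)) [0..<N])"

definition pass_value :: "nat \<Rightarrow> nat \<Rightarrow> nat \<Rightarrow> (nat \<Rightarrow> nat \<Rightarrow> real) \<Rightarrow> real \<Rightarrow> real" where
  "pass_value m n N c Y = (\<Sum>j<N. \<Sum>i<n. c j (Suc i) * power_approx m (min (relu (Y - real j)) 1) i)"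

lemma written_taylor_block: "written (taylor_block m n acc d) \<subseteq> {1, 2, 3, 8, 9, 10, 11, 12, acc, Suc acc}"
  using written_mult_gadget by (fastforce simp: taylor_block_def block_head_def written_concat_map)

lemma written_taylor_pass: "written (taylor_pass m n N acc c) \<subseteq> {1, 2, 3, 8, 9, 10, 11, 12, acc, Suc acc}"
  using written_taylor_block by (fastforce simp: taylor_pass_def written_concat_map)

lemma exec_block_head:
  assumes s: "nonneg_regs s" and acc: "acc \<in> {4, 5, 6}"
  shows "exec (block_head acc d) s 1 = relu (s 1 - 1) \<and>
         exec (block_head acc d) s 2 = min (s 1) 1 \<and> exec (block_head acc d) s 3 = min (s 1) 1 \<and>
         exec (block_head acc d) s acc = s acc + max d 0 * min (s 1) 1 \<and>
         exec (block_head acc d) s (Suc acc) = s (Suc acc) + max (-d) 0 * min (s 1) 1"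
proof -
  have nonneg: "0 \<le> s 1" "0 \<le> s acc" "0 \<le> s (Suc acc)" using s acc by (auto simp: nonneg_regs_def)
  then have t: "s 1 - relu (s 1 - 1) = min (s 1) 1" by (auto simp: relu_def)
  have "s acc + max d 0 * s 1 - max d 0 * relu (s 1 - 1) = s acc + max d 0 * min (s 1) 1"
    "s (Suc acc) + max (-d) 0 * s 1 - max (-d) 0 * relu (s 1 - 1) = s (Suc acc) + max (-d) 0 * min (s 1) 1"
    unfolding t[symmetric] by (simp_all add: algebra_simps)
  moreover have "0 \<le> s acc + max d 0 * min (s 1) 1" "0 \<le> s (Suc acc) + max (-d) 0 * min (s 1) 1"
    using nonneg by auto
  ultimately show ?thesis using nonneg acc t by (auto simp: block_head_def algebra_simps)
qed

lemma exec_mult_gadgets: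
  assumes s: "nonneg_regs s" and acc: "acc \<in> {4, 5, 6}"
    and t: "0 \<le> t" "t \<le> 1" "s 2 = t" "s 3 = t"
  shows "exec (concat (map (\<lambda>i. mult_gadget m acc (d (Suc i))) [1..<Suc k])) s 3 = power_approx m t k \<and>
    exec (concat (map (\<lambda>i. mult_gadget m acc (d (Suc i))) [1..<Suc k])) s acc =
      s acc + (\<Sum>i\<in>{1..k}. max (d (Suc i)) 0 * power_approx m t i) \<and>
    exec (concat (map (\<lambda>i. mult_gadget m acc (d (Suc i))) [1..<Suc k])) s (Suc acc) =
      s (Suc acc) + (\<Sum>i\<in>{1..k}. max (-d (Suc i)) 0 * power_approx m t i) \<and>
    exec (concat (map (\<lambda>i. mult_gadget m acc (d (Suc i))) [1..<Suc k])) s 2 = t"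
proof (induction k)
  case (Suc k)
  let ?s = "exec (concat (map (\<lambda>i. mult_gadget m acc (d (Suc i))) [1..<Suc k])) s"
  have "0 \<le> power_approx m t k" "power_approx m t k \<le> 1" using power_approx_range t by auto
  moreover have "2 \<notin> written (mult_gadget m acc (d (Suc (Suc k))))"
    using written_mult_gadget acc by fastforce
  ultimately show ?case
    using exec_mult_gadget[OF nonneg_regs_exec[OF s] acc t(1,2),
        where p = "power_approx m t k" and m = m and d = "d (Suc (Suc k))"]
      Suc.IH exec_unwritten[of 2 "mult_gadget m acc (d (Suc (Suc k)))" ?s]
    by (simp add: algebra_simps)
qed (simp add: t)

lemma exec_taylor_block:
  assumes s: "nonneg_regs s" and acc: "acc \<in> {4, 5, 6}" and n: "1 \<le> n"
  shows "exec (taylor_block m n acc d) s 1 = relu (s 1 - 1) \<and>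
    exec (taylor_block m n acc d) s acc =
      s acc + (\<Sum>i<n. max (d (Suc i)) 0 * power_approx m (min (s 1) 1) i) \<and>
    exec (taylor_block m n acc d) s (Suc acc) =
      s (Suc acc) + (\<Sum>i<n. max (-d (Suc i)) 0 * power_approx m (min (s 1) 1) i)"
proof -
  obtain k where k: "n = Suc k" using n by (cases n) auto
  let ?s = "exec (block_head acc (d 1)) s" and ?t = "min (s 1) 1"
  let ?G = "concat (map (\<lambda>i. mult_gadget m acc (d (Suc i))) [1..<Suc k])"
  note head = exec_block_head[OF s acc, of "d 1"]
  have t: "0 \<le> ?t" "?t \<le> 1" using s by (auto simp: nonneg_regs_def)
  have "?s 2 = ?t" "?s 3 = ?t" using head by auto
  note gadgets = exec_mult_gadgets[OF nonneg_regs_exec[OF s] acc t this, where m = m and d = d and k = k]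
  have eq: "exec (taylor_block m n acc d) s = exec ?G ?s"
    by (simp add: taylor_block_def k del: upt_Suc)
  have "1 \<notin> written ?G"
    using written_mult_gadget acc by (fastforce simp: written_concat_map)
  then have one: "exec ?G ?s 1 = ?s 1" by (rule exec_unwritten)
  have split: "(\<Sum>i<Suc k. f i) = f 0 + (\<Sum>i\<in>{1..k}. f i)" for f :: "nat \<Rightarrow> real"
    by (simp add: lessThan_Suc_atMost atLeast0AtMost[symmetric] sum.atLeast_Suc_atMost
        del: sum.lessThan_Suc)
  show ?thesis
    unfolding eq unfolding k split using one head gadgets by (simp add: algebra_simps del: upt_Suc)
qed

lemma relu_relu_minus_one: "relu (relu (Y - real j) - 1) = relu (Y - real (Suc j))"
  by (auto simp: relu_def max_def)

lemma exec_taylor_pass: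
  assumes s: "nonneg_regs s" and acc: "acc \<in> {4, 5, 6}" and n: "1 \<le> n"
  shows "exec (taylor_pass m n N acc c) s 1 = relu (s 1 - real N) \<and>
    exec (taylor_pass m n N acc c) s acc = s acc + pass_value m n N (\<lambda>j i. max (c j i) 0) (s 1) \<and>
    exec (taylor_pass m n N acc c) s (Suc acc) =
      s (Suc acc) + pass_value m n N (\<lambda>j i. max (-c j i) 0) (s 1)"
proof (induction N)
  case 0
  have "0 \<le> s 1" using s by (simp add: nonneg_regs_def)
  then show ?case by (simp add: taylor_pass_def pass_value_def)
next
  case (Suc N)
  have "taylor_pass m n (Suc N) acc c = taylor_pass m n N acc c @ taylor_block m n acc (c N)"
    by (simp add: taylor_pass_def)
  then show ?case
    using exec_taylor_block[OF nonneg_regs_exec[OF s] acc n, where m = m and d = "c N"] Suc.IH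
    by (simp add: relu_relu_minus_one pass_value_def algebra_simps)
qed

lemma pass_value_pos_neg:
  "pass_value m n N (\<lambda>j i. max (c j i) 0) Y - pass_value m n N (\<lambda>j i. max (-c j i) 0) Y =
    pass_value m n N c Y"
proof -
  have "max a 0 - max (-a) 0 = a" for a :: real by (simp add: max_def)
  then show ?thesis by (simp add: pass_value_def flip: sum_subtractf left_diff_distrib)
qed

lemma taylor_pass_difference:
  assumes "nonneg_regs s" "acc \<in> {4, 5, 6}" "1 \<le> n"
  shows "exec (taylor_pass m n N acc c) s acc - exec (taylor_pass m n N acc c) s (Suc acc)
     = s acc - s (Suc acc) + pass_value m n N c (s 1)"
  using exec_taylor_pass[OF assms, of m N c] pass_value_pos_neg[of m n N c "s 1"] by simp

text \<open>One channel per output component; each channel restarts the cell counter in register 1 from the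
  rescaled input kept in register 0.\<close>

fun channels :: "nat \<Rightarrow> nat \<Rightarrow> nat \<Rightarrow> nat \<Rightarrow> (nat \<Rightarrow> nat \<Rightarrow> real) list \<Rightarrow> (nat \<times> neuron) list list" where
  "channels m n N acc [] = []"
| "channels m n N acc (c # cs) =
     [(1, ([(0, 1)], 0))] # taylor_pass m n N acc c @ channels m n N (acc + 2) cs"

lemma written_channels:
  "written (channels m n N acc cs) \<subseteq> {1, 2, 3, 8, 9, 10, 11, 12} \<union> {acc..<acc + 2 * length cs}"
proof (induction cs arbitrary: acc)
  case (Cons c cs)
  have "{acc, Suc acc} \<union> {acc + 2..<acc + 2 + 2 * length cs} \<subseteq> {acc..<acc + 2 * length (c # cs)}"
    by auto
  moreover have "written (channels m n N acc (c # cs)) =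
      {1} \<union> written (taylor_pass m n N acc c) \<union> written (channels m n N (acc + 2) cs)"
    by simp
  ultimately show ?case using Cons.IH[of "acc + 2"] written_taylor_pass[of m n N acc c] by blast
qed simp

lemma exec_channels:
  assumes "nonneg_regs s" "1 \<le> n" "4 \<le> acc" "acc + 2 * length cs \<le> 8"
    and "\<forall>k\<in>{acc..<acc + 2 * length cs}. s k = 0" "k < length cs"
  shows "exec (channels m n N acc cs) s (acc + 2 * k) - exec (channels m n N acc cs) s (acc + 2 * k + 1)
     = pass_value m n N (cs ! k) (s 0)"
  using assms
proof (induction cs arbitrary: acc s k)
  case (Cons c cs)
  define s1 where "s1 = exec_layer [(1, ([(0, 1)], 0))] s"
  define s' where "s' = exec (taylor_pass m n N acc c) s1"
  have acc: "acc \<in> {4, 5, 6}" using Cons.prems(3,4) by auto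
  have "0 \<le> s 0" using Cons.prems(1) by (simp add: nonneg_regs_def)
  then have s1: "s1 0 = s 0" "s1 1 = s 0" "s1 acc = 0" "s1 (Suc acc) = 0"
    using Cons.prems(3,5) by (auto simp: s1_def)
  have "nonneg_regs s1" unfolding s1_def by (rule nonneg_regs_exec_layer[OF Cons.prems(1)])
  have "0 \<notin> written (taylor_pass m n N acc c)" using written_taylor_pass[of m n N acc c] acc by auto
  then have s': "s' 0 = s 0" "s' acc - s' (Suc acc) = pass_value m n N c (s 0)" "nonneg_regs s'"
    using taylor_pass_difference[OF \<open>nonneg_regs s1\<close> acc Cons.prems(2), of m N c] s1
      nonneg_regs_exec[OF \<open>nonneg_regs s1\<close>]
    by (simp_all add: s'_def exec_unwritten)
  have rest: "k' \<notin> written (taylor_pass m n N acc c)" if "acc + 2 \<le> k'" "k' < 8" for k'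
  proof -
    have "k' \<notin> {1, 2, 3, 8, 9, 10, 11, 12, acc, Suc acc}" using that acc by auto
    then show ?thesis using written_taylor_pass[of m n N acc c] by blast
  qed
  have run: "exec (channels m n N acc (c # cs)) s = exec (channels m n N (acc + 2) cs) s'"
    by (simp add: s'_def s1_def)
  show ?case
  proof (cases k)
    case 0
    have "acc \<notin> {1, 2, 3, 8, 9, 10, 11, 12} \<union> {acc + 2..<acc + 2 + 2 * length cs}"
      "Suc acc \<notin> {1, 2, 3, 8, 9, 10, 11, 12} \<union> {acc + 2..<acc + 2 + 2 * length cs}"
      using acc by auto
    then have "acc \<notin> written (channels m n N (acc + 2) cs)"
      "Suc acc \<notin> written (channels m n N (acc + 2) cs)"
      using written_channels[of m n N "acc + 2" cs] by blast+
    then show ?thesis unfolding run using s' 0 by (simp add: exec_unwritten)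
  next
    case (Suc k')
    have "\<forall>k\<in>{acc + 2..<acc + 2 + 2 * length cs}. s' k = 0"
      using Cons.prems(4,5) rest by (auto simp: s'_def s1_def exec_unwritten)
    then show ?thesis
      unfolding run using Cons.IH[of s' "acc + 2" k'] Cons.prems s' Suc by (simp add: algebra_simps)
  qed
qed simp

text \<open>The input enters as c1 (x + D) with c1 \<le> 1 and is rescaled by r doublings and a final factor
  c \<le> 1, so that the large factor N / (2 D) costs depth instead of large weights.\<close>

definition approx_program ::
  "nat \<Rightarrow> real \<Rightarrow> nat \<Rightarrow> nat \<Rightarrow> nat \<Rightarrow> (nat \<Rightarrow> nat \<Rightarrow> real) list \<Rightarrow> (nat \<times> neuron) list list" where
  "approx_program r c m n N cs =
     replicate r [(0, ([(0, 2)], 0))] @ [[(0, ([(0, c)], 0))]] @ channels m n N 4 cs"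

definition input_layer :: "real \<Rightarrow> real \<Rightarrow> (nat \<times> neuron) list" where
  "input_layer c D = [(0, ([(0, c)], c * D))]"

definition readout :: "real list \<Rightarrow> neuron list" where
  "readout bs = map (\<lambda>k. ([(4 + 2 * k, 1), (5 + 2 * k, -1)], bs ! k)) [0..<length bs]"

lemma relu_affine_input_layer:
  assumes "0 \<le> c" "0 \<le> x + D"
  shows "map relu (affine (register_layer 1 (input_layer c D)) [x]) =
    map (\<lambda>k. if k = 0 then c * (x + D) else 0) [0..<13]"
proof -
  let ?L = "input_layer c D"
  have "affine (register_layer 1 ?L) [x] =
      map (\<lambda>k. (\<Sum>(i, w)\<leftarrow>fst (neuron_at ?L k). if i < 1 then w * x else 0) + snd (neuron_at ?L k))
        [0..<13]"
    using affine_dense_layer[of 1 "map (neuron_at ?L) [0..<13]" "\<lambda>_. x"] by (simp add: register_layer_def)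
  moreover have "0 \<le> c * (x + D)" using assms by simp
  ultimately show ?thesis
    by (auto simp: neuron_at_def input_layer_def algebra_simps intro!: map_cong)
qed

lemma exec_doublings:
  "0 \<le> s 0 \<Longrightarrow> exec (replicate r [(0, ([(0, 2)], 0))]) s = s(0 := 2^r * s 0)"
  by (induction r arbitrary: s) (simp_all add: algebra_simps)

lemma realize_approx_network:
  assumes "\<forall>L\<in>set (approx_program r c m n N cs). layer_bounded C L"
    and "\<forall>nr\<in>set (readout bs). neuron_bounded C nr"
    and "length bs = length cs" "length cs \<le> 2" "1 \<le> n" "0 \<le> c1" "0 \<le> c" "0 \<le> x + D"
  shows "realize (network (input_layer c1 D) (approx_program r c m n N cs) (readout bs)) [x] =
     map (\<lambda>k. bs ! k + pass_value m n N (cs ! k) (c * 2^r * c1 * (x + D))) [0..<length bs]"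
proof -
  define s0 where "s0 = (\<lambda>k::nat. if k = 0 then c1 * (x + D) else 0)"
  define s where "s = exec (replicate r [(0, ([(0, 2)], 0))] @ [[(0, ([(0, c)], 0))]]) s0"
  have s0: "nonneg_regs s0" using assms(6,8) by (simp add: s0_def nonneg_regs_def)
  have s: "s 0 = c * 2^r * c1 * (x + D)" "\<forall>k\<in>{4..<4 + 2 * length cs}. s k = 0"
    using assms(6-8) by (auto simp: s_def s0_def exec_doublings)
  have "nonneg_regs s" unfolding s_def by (rule nonneg_regs_exec[OF s0])
  then have "exec (channels m n N 4 cs) s (4 + 2 * k) - exec (channels m n N 4 cs) s (5 + 2 * k)
      = pass_value m n N (cs ! k) (c * 2^r * c1 * (x + D))" if "k < length cs" for k
    using exec_channels[of s n 4 cs k m N] assms(4,5) s that by simp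
  then show ?thesis
    using realize_network[OF assms(1,2) s0] relu_affine_input_layer[OF assms(6,8)] assms(3)
    by (simp add: readout_def approx_program_def s_def s0_def algebra_simps)
qed

lemma layer_bounded_squaring:
  assumes "2 \<le> C" "L \<in> set (squaring m)"
  shows "layer_bounded C L"
proof -
  obtain q where "L \<in> set (square_step q)" using assms(2) by (auto simp: squaring_def)
  moreover have "(2::real) \<le> 4^Suc q"
    using one_le_power[of "4::real" q] by (simp only: power_Suc) linarith
  then have "2 / 4^Suc q \<le> (1::real)" by simp
  then have "2 / 4^Suc q \<le> C" using assms(1) by linarith
  ultimately show ?thesis using assms(1) by (auto simp: square_step_def neuron_bounded_def)
qed

lemma layer_bounded_mult_gadget:
  assumes "2 \<le> C" "\<bar>d\<bar> \<le> C" "acc \<in> {4, 5, 6}" "L \<in> set (mult_gadget m acc d)"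
  shows "layer_bounded C L"
  using assms layer_bounded_squaring[of C _ m]
  by (auto simp: mult_gadget_def polarize_def clip_accumulate_def neuron_bounded_def)

lemma layer_bounded_taylor_pass:
  assumes "2 \<le> C" "1 \<le> n" "\<forall>j<N. \<forall>i\<in>{1..n}. \<bar>c j i\<bar> \<le> C" "acc \<in> {4, 5, 6}"
    and "L \<in> set (taylor_pass m n N acc c)"
  shows "layer_bounded C L"
proof -
  obtain j where j: "j < N" "L \<in> set (taylor_block m n acc (c j))"
    using assms(5) by (auto simp: taylor_pass_def)
  show ?thesis
  proof (cases "L \<in> set (block_head acc (c j 1))")
    case True
    have "\<bar>c j 1\<bar> \<le> C" using assms(2,3) j(1) by auto
    then show ?thesis using True assms(1,4) by (auto simp: block_head_def neuron_bounded_def)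
  next
    case False
    then obtain i where "i \<in> {1..<n}" "L \<in> set (mult_gadget m acc (c j (Suc i)))"
      using j(2) by (auto simp: taylor_block_def)
    then show ?thesis
      using assms(1,3,4) j(1) by (intro layer_bounded_mult_gadget[of C "c j (Suc i)" acc]) auto
  qed
qed

lemma layer_bounded_channels:
  assumes "2 \<le> C" "1 \<le> n" "\<forall>c\<in>set cs. \<forall>j<N. \<forall>i\<in>{1..n}. \<bar>c j i\<bar> \<le> C"
    and "4 \<le> acc" "acc + 2 * length cs \<le> 8" "L \<in> set (channels m n N acc cs)"
  shows "layer_bounded C L"
  using assms(3-6)
proof (induction cs arbitrary: acc)
  case (Cons c cs)
  have "acc \<in> {4, 5, 6}" using Cons.prems(2,3) by auto
  then show ?case
    using Cons.IH[of "acc + 2"] Cons.prems assms(1)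
      layer_bounded_taylor_pass[OF assms(1,2), of N c acc L m]
    by (auto simp: neuron_bounded_def)
qed simp

lemma layer_bounded_approx_program:
  assumes "2 \<le> C" "1 \<le> n" "\<forall>c\<in>set cs. \<forall>j<N. \<forall>i\<in>{1..n}. \<bar>c j i\<bar> \<le> C"
    and "length cs \<le> 2" "0 \<le> c" "c \<le> C"
  shows "\<forall>L\<in>set (approx_program r c m n N cs). layer_bounded C L"
  using assms layer_bounded_channels[OF assms(1-3), of 4]
  by (auto simp: approx_program_def neuron_bounded_def)

lemma neuron_bounded_readout:
  assumes "1 \<le> C" "\<forall>b\<in>set bs. \<bar>b\<bar> \<le> C" "length bs \<le> 2"
  shows "\<forall>nr\<in>set (readout bs). neuron_bounded C nr"
  using assms by (auto simp: readout_def neuron_bounded_def)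

lemma layer_bounded_input_layer: "\<bar>c\<bar> \<le> C \<Longrightarrow> \<bar>c * D\<bar> \<le> C \<Longrightarrow> layer_bounded C (input_layer c D)"
  by (simp add: input_layer_def neuron_bounded_def)

lemma length_approx_program:
  "length (approx_program r c m n N cs) = r + 1 + length cs * (1 + N * (2 + (n - 1) * (2 * m + 5)))"
proof -
  have "length (squaring m) = 2 * m"
    by (induction m) (auto simp: squaring_def square_step_def)
  then have "length (taylor_pass m n N acc c) = N * (2 + (n - 1) * (2 * m + 5))" for acc c
    by (simp add: taylor_pass_def taylor_block_def block_head_def mult_gadget_def polarize_def
        clip_accumulate_def length_concat comp_def sum_list_triv algebra_simps)
  moreover have "length (channels m n N acc cs) = length cs * (1 + N * (2 + (n - 1) * (2 * m + 5)))"
    for acc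
    using calculation by (induction cs arbitrary: acc) auto
  ultimately show ?thesis by (simp add: approx_program_def)
qed

section \<open>Taylor approximation on a grid\<close>

lemma taylor_remainder_le:
  fixes F :: "nat \<Rightarrow> real \<Rightarrow> 'a::banach"
  assumes ab: "a \<le> b" and M: "0 \<le> M"
    and deriv: "\<And>m t. m \<le> n \<Longrightarrow> t \<in> {a..b} \<Longrightarrow> (F m has_vector_derivative F (Suc m) t) (at t within {a..b})"
    and bound: "\<And>t. t \<in> {a<..<b} \<Longrightarrow> norm (F (Suc n) t) \<le> M"
  shows "norm (F 0 b - (\<Sum>i\<le>n. ((b - a)^i / fact i) *\<^sub>R F i a)) \<le> M * (b - a)^Suc n"
proof -
  have int: "((\<lambda>t. ((b - t)^n / fact n) *\<^sub>R F (Suc n) t) has_integral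
      F 0 b - (\<Sum>i\<le>n. ((b - a)^i / fact i) *\<^sub>R F i a)) {a..b}"
    using Taylor_has_integral[of "Suc n" F "F 0" a b] deriv ab by (simp add: lessThan_Suc_atMost)
  have pointwise: "norm (((b - t)^n / fact n) *\<^sub>R F (Suc n) t) \<le> (b - a)^n * M"
    if "t \<in> {a..b} - {a, b}" for t
  proof -
    have t: "a < t" "t < b" using that by auto
    have "(b - t)^n / fact n \<le> (b - t)^n / 1"
      using t by (intro divide_left_mono) (auto simp: fact_ge_1)
    also have "\<dots> \<le> (b - a)^n" using t by (simp add: power_mono)
    finally have "\<bar>(b - t)^n / fact n\<bar> \<le> (b - a)^n" using t by simp
    then have "\<bar>(b - t)^n / fact n\<bar> * norm (F (Suc n) t) \<le> (b - a)^n * M"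
      using bound[of t] t M by (intro mult_mono) auto
    then show ?thesis by simp
  qed
  have "norm (F 0 b - (\<Sum>i\<le>n. ((b - a)^i / fact i) *\<^sub>R F i a)) \<le> (b - a)^n * M * (b - a)"
    using has_integral_bound_real[where B = "(b - a)^n * M" and S = "{a, b}", OF _ _ int pointwise] ab M
    by simp
  then show ?thesis using ab by (simp add: algebra_simps)
qed

lemma in_P_derivatives:
  fixes f :: "real \<Rightarrow> 'a::real_normed_vector"
  assumes "in_P lam D f" "0 < D"
  obtains F where "\<And>x. x \<in> {-D..D} \<Longrightarrow> F 0 x = f x"
    "\<And>m x. x \<in> {-D..D} \<Longrightarrow> (F m has_vector_derivative F (Suc m) x) (at x within {-D..D})"
    "\<And>m x. x \<in> {-D..D} \<Longrightarrow> norm (F m x) \<le> lam m"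
proof -
  obtain F where F0: "\<forall>x\<in>{-D..D}. F 0 x = f x"
    and deriv: "\<forall>m. \<forall>x\<in>{-D..D}. (F m has_vector_derivative F (Suc m) x) (at x within {-D..D})"
    and bound: "\<forall>m. \<forall>x\<in>{-D<..<D}. norm (F m x) \<le> lam m"
    using assms(1) unfolding in_P_def by blast
  have "norm (F m x) \<le> lam m" if "x \<in> {-D..D}" for m x
  proof -
    have "continuous_on {-D..D} (F m)" using deriv by (intro continuous_on_vector_derivative) blast
    moreover have "closure {-D<..<D} = {-D..D}" using assms(2) by simp
    ultimately show ?thesis
      using continuous_on_closure_norm_le[of "{-D<..<D}" "F m" "lam m" x] bound that by auto
  qed
  then show ?thesis using that F0 deriv by blast
qed

definition taylor_bounds :: "real \<Rightarrow> nat \<Rightarrow> real \<Rightarrow> real \<Rightarrow> (real \<Rightarrow> real) \<Rightarrow> (nat \<Rightarrow> real \<Rightarrow> real) \<Rightarrow> bool" where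
  "taylor_bounds D n L R g c \<longleftrightarrow>
     (\<forall>a b. -D \<le> a \<longrightarrow> a \<le> b \<longrightarrow> b \<le> D \<longrightarrow>
        \<bar>g b - (\<Sum>i\<le>n. (b - a)^i / fact i * c i a)\<bar> \<le> R * (b - a)^Suc n) \<and>
     (\<forall>k\<le>n. \<forall>a\<in>{-D..D}. \<bar>c k a\<bar> \<le> L)"

lemma taylor_bounds_linear_image:
  fixes F :: "nat \<Rightarrow> real \<Rightarrow> 'a::banach" and \<phi> :: "'a \<Rightarrow> real"
  assumes F0: "\<And>x. x \<in> {-D..D} \<Longrightarrow> F 0 x = f x"
    and deriv: "\<And>m x. x \<in> {-D..D} \<Longrightarrow> (F m has_vector_derivative F (Suc m) x) (at x within {-D..D})"
    and bound: "\<And>m x. x \<in> {-D..D} \<Longrightarrow> norm (F m x) \<le> lam m"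
    and "mono lam" "0 \<le> lam (Suc n)" and \<phi>: "linear \<phi>" "\<And>y. \<bar>\<phi> y\<bar> \<le> norm y"
  shows "taylor_bounds D n (lam n) (lam (Suc n)) (\<lambda>x. \<phi> (f x)) (\<lambda>k a. \<phi> (F k a))"
  unfolding taylor_bounds_def
proof (intro conjI allI impI ballI)
  fix a b assume ab: "-D \<le> a" "a \<le> b" "b \<le> D"
  have "norm (F 0 b - (\<Sum>i\<le>n. ((b - a)^i / fact i) *\<^sub>R F i a)) \<le> lam (Suc n) * (b - a)^Suc n"
  proof (rule taylor_remainder_le)
    show "(F m has_vector_derivative F (Suc m) t) (at t within {a..b})" if "t \<in> {a..b}" for m t
      using deriv[of t m] that ab by (auto intro: has_vector_derivative_within_subset)
    show "norm (F (Suc n) t) \<le> lam (Suc n)" if "t \<in> {a<..<b}" for t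
      using bound that ab by auto
  qed fact+
  moreover have "\<phi> (F 0 b - (\<Sum>i\<le>n. ((b - a)^i / fact i) *\<^sub>R F i a)) =
      \<phi> (f b) - (\<Sum>i\<le>n. (b - a)^i / fact i * \<phi> (F i a))"
    using ab F0[of b] by (simp add: linear_diff[OF \<phi>(1)] linear_sum[OF \<phi>(1)] linear_scale[OF \<phi>(1)])
  ultimately show "\<bar>\<phi> (f b) - (\<Sum>i\<le>n. (b - a)^i / fact i * \<phi> (F i a))\<bar> \<le> lam (Suc n) * (b - a)^Suc n"
    using \<phi>(2) by (metis order_trans)
next
  fix k a assume "k \<le> n" "a \<in> {-D..D}"
  then show "\<bar>\<phi> (F k a)\<bar> \<le> lam n"
    using \<phi>(2)[of "F k a"] bound[of a k] monoD[OF \<open>mono lam\<close>, of k n] by linarith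
qed

lemma clamp_to_cell:
  assumes "0 < h"
  shows "a + h * min (relu ((x - a) / h)) 1 = max a (min x (a + h))"
proof -
  have "h * min (relu ((x - a) / h)) 1 = min (relu (x - a)) h"
    using assms by (simp add: relu_def min_mult_distrib_left max_mult_distrib_left)
  then show ?thesis using assms by (auto simp: relu_def min_def max_def)
qed

lemma sum_clamped_increments:
  fixes a :: "nat \<Rightarrow> real" and g :: "real \<Rightarrow> real"
  assumes "\<And>j. a j \<le> a (Suc j)" "a 0 \<le> x" "x \<le> a N"
  shows "(\<Sum>j<N. g (max (a j) (min x (a (Suc j)))) - g (a j)) = g x - g (a 0)"
proof -
  have "g (max (a j) (min x (a (Suc j)))) - g (a j) = g (min x (a (Suc j))) - g (min x (a j))" for j
    using assms(1)[of j] by (cases "x \<le> a j"; cases "x \<le> a (Suc j)") (auto simp: min_def max_def)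
  then have "(\<Sum>j<N. g (max (a j) (min x (a (Suc j)))) - g (a j)) = g (min x (a N)) - g (min x (a 0))"
    using sum_lessThan_telescope[of "\<lambda>j. g (min x (a j))" N] by simp
  then show ?thesis using assms(2,3) by simp
qed

definition cell_coeffs :: "(nat \<Rightarrow> real \<Rightarrow> real) \<Rightarrow> real \<Rightarrow> real \<Rightarrow> nat \<Rightarrow> nat \<Rightarrow> real" where
  "cell_coeffs c D h j k = h^k / fact k * c k (-D + real j * h)"

lemma taylor_bounds_value:
  assumes "taylor_bounds D n L R g c" "-D \<le> y" "y \<le> D"
  shows "c 0 y = g y"
proof -
  have "(\<Sum>i\<le>n. (y - y)^i / fact i * c i y) = c 0 y" by (induction n) auto
  then show ?thesis using assms unfolding taylor_bounds_def by force
qed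

lemma taylor_step_error:
  assumes tay: "taylor_bounds D n L R g c" and "0 \<le> R" "-D \<le> a" "0 \<le> s" "s \<le> h" "a + s \<le> D"
  shows "\<bar>g (a + s) - g a - (\<Sum>i<n. s^Suc i / fact (Suc i) * c (Suc i) a)\<bar> \<le> R * h^Suc n"
proof -
  have taylor: "\<forall>a b. -D \<le> a \<longrightarrow> a \<le> b \<longrightarrow> b \<le> D \<longrightarrow>
      \<bar>g b - (\<Sum>i\<le>n. (b - a)^i / fact i * c i a)\<bar> \<le> R * (b - a)^Suc n"
    using tay unfolding taylor_bounds_def by blast
  have "(\<Sum>i\<le>n. s^i / fact i * c i a) = g a + (\<Sum>i<n. s^Suc i / fact (Suc i) * c (Suc i) a)"
    using taylor_bounds_value[OF tay, of a] assms(3-6) by (subst sum.atMost_shift) simp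
  moreover have "\<bar>g (a + s) - (\<Sum>i\<le>n. s^i / fact i * c i a)\<bar> \<le> R * s^Suc n"
    using spec[OF spec[OF taylor, of a], of "a + s"] assms(3,4,6) by simp
  moreover have "R * s^Suc n \<le> R * h^Suc n"
    using assms(2,4,5) by (intro mult_left_mono power_mono) auto
  ultimately show ?thesis by (simp add: algebra_simps)
qed

lemma piecewise_taylor_error:
  assumes tay: "taylor_bounds D n L R g c" and "0 < D" "0 < N" "0 \<le> R"
    and x: "-D \<le> x" "x \<le> D" and h: "h = 2 * D / real N"
  shows "\<bar>g x - (c 0 (-D) + (\<Sum>j<N. \<Sum>i<n.
            cell_coeffs c D h j (Suc i) * (min (relu ((x + D) / h - real j)) 1)^Suc i))\<bar>
         \<le> real N * R * h^Suc n"
proof -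
  have hpos: "0 < h" using assms(2,3) h by simp
  define a where "a j = -D + real j * h" for j
  define t where "t j = min (relu ((x + D) / h - real j)) 1" for j
  define S where "S j = (\<Sum>i<n. (h * t j)^Suc i / fact (Suc i) * c (Suc i) (a j))" for j
  have a_Suc: "a (Suc j) = a j + h" for j by (simp add: a_def algebra_simps)
  have a_range: "-D \<le> a j" "a j + h \<le> D" if "j < N" for j
  proof -
    show "-D \<le> a j" using hpos by (simp add: a_def)
    have "a j + h = -D + real (Suc j) * h" by (simp add: a_def algebra_simps)
    also have "\<dots> \<le> -D + real N * h" using that hpos by (simp add: mult_right_mono)
    also have "\<dots> = D" using assms(3) by (simp add: h)
    finally show "a j + h \<le> D" .
  qed
  have t: "0 \<le> h * t j" "h * t j \<le> h" for j using hpos by (auto simp: t_def mult_left_le)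
  have clamp: "a j + h * t j = max (a j) (min x (a (Suc j)))" for j
  proof -
    have "(x + D) / h - real j = (x - a j) / h" using hpos by (simp add: a_def field_simps)
    then show ?thesis using clamp_to_cell[OF hpos, of "a j" x] by (simp add: t_def a_Suc)
  qed
  have "(\<Sum>j<N. g (a j + h * t j) - g (a j)) = g x - g (-D)"
    using sum_clamped_increments[of a x N g] a_range[of "N - 1"] assms(3) x hpos
    by (simp add: clamp a_Suc) (simp add: a_def h)
  moreover have "(\<Sum>j<N. \<Sum>i<n. cell_coeffs c D h j (Suc i) * t j^Suc i) = (\<Sum>j<N. S j)"
    by (simp add: S_def cell_coeffs_def a_def power_mult_distrib mult_ac)
  ultimately have "g x - (c 0 (-D) + (\<Sum>j<N. \<Sum>i<n. cell_coeffs c D h j (Suc i) * t j^Suc i))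
      = (\<Sum>j<N. g (a j + h * t j) - g (a j) - S j)"
    using taylor_bounds_value[OF tay, of "-D"] assms(2) by (simp add: sum_subtractf)
  then have "\<bar>g x - (c 0 (-D) + (\<Sum>j<N. \<Sum>i<n. cell_coeffs c D h j (Suc i) * t j^Suc i))\<bar>
      \<le> (\<Sum>j<N. \<bar>g (a j + h * t j) - g (a j) - S j\<bar>)"
    by (simp add: sum_abs)
  also have "\<dots> \<le> (\<Sum>j<N. R * h^Suc n)"
  proof (rule sum_mono)
    fix j assume "j \<in> {..<N}"
    then have "-D \<le> a j" "a j + h * t j \<le> D" using a_range t(2)[of j] by force+
    then show "\<bar>g (a j + h * t j) - g (a j) - S j\<bar> \<le> R * h^Suc n"
      using taylor_step_error[OF tay \<open>0 \<le> R\<close> _ t(1,2)] by (simp add: S_def)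
  qed
  finally show ?thesis by (simp add: t_def)
qed

lemma pass_value_error:
  assumes "0 \<le> L" "\<And>j i. j < N \<Longrightarrow> i < n \<Longrightarrow> \<bar>c j (Suc i)\<bar> \<le> L"
  shows "\<bar>pass_value m n N c Y - (\<Sum>j<N. \<Sum>i<n. c j (Suc i) * (min (relu (Y - real j)) 1)^Suc i)\<bar>
     \<le> real N * real n * L * real n / 4^Suc m"
proof -
  let ?t = "\<lambda>j. min (relu (Y - real j)) 1"
  have "\<bar>c j (Suc i) * power_approx m (?t j) i - c j (Suc i) * ?t j^Suc i\<bar> \<le> L * (real n / 4^Suc m)"
    if "j < N" "i < n" for j i
  proof -
    have "\<bar>power_approx m (?t j) i - ?t j^Suc i\<bar> \<le> real i / 4^Suc m"
      by (intro power_approx_error) auto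
    also have "\<dots> \<le> real n / 4^Suc m"
      using that by (intro divide_right_mono) auto
    finally have "\<bar>power_approx m (?t j) i - ?t j^Suc i\<bar> \<le> real n / 4^Suc m" .
    then have "\<bar>c j (Suc i)\<bar> * \<bar>power_approx m (?t j) i - ?t j^Suc i\<bar> \<le> L * (real n / 4^Suc m)"
      using assms(2)[OF that] by (intro mult_mono) auto
    then show ?thesis by (simp add: abs_mult flip: right_diff_distrib)
  qed
  then have "\<bar>\<Sum>j<N. \<Sum>i<n. c j (Suc i) * power_approx m (?t j) i - c j (Suc i) * ?t j^Suc i\<bar>
      \<le> (\<Sum>j<N. \<Sum>i<n. L * (real n / 4^Suc m))"
    by (intro order_trans[OF sum_abs] sum_mono order_trans[OF sum_abs]) auto
  then show ?thesis by (simp add: pass_value_def sum_subtractf)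
qed

lemma cell_coeffs_bounded:
  assumes "taylor_bounds D n L R g c" "0 < h" "h \<le> 1" "real N * h = 2 * D" "j < N" "k \<le> n"
  shows "\<bar>cell_coeffs c D h j k\<bar> \<le> L"
proof -
  have "real j * h \<le> real N * h" using assms(2,5) by (intro mult_right_mono) auto
  then have "\<bar>c k (-D + real j * h)\<bar> \<le> L"
    using assms(1,2,4,6) unfolding taylor_bounds_def by simp
  moreover have "h^k / fact k \<le> h^k / 1"
    using assms(2) by (intro divide_left_mono) (auto simp: fact_ge_1)
  then have "h^k / fact k \<le> h^k" by simp
  then have "h^k / fact k \<le> 1" using power_le_one[of h k] assms(2,3) by linarith
  ultimately have "h^k / fact k * \<bar>c k (-D + real j * h)\<bar> \<le> 1 * L"
    by (intro mult_mono) auto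
  then show ?thesis using assms(2) by (simp add: cell_coeffs_def abs_mult)
qed

lemma taylor_error_le:
  assumes "0 < N" "4 * R * (2 * D)^Suc n \<le> \<epsilon> * real N ^ n"
  shows "real N * R * (2 * D / real N)^Suc n \<le> \<epsilon> / 4"
proof -
  have "real N * R * (2 * D / real N)^Suc n = R * (2 * D)^Suc n / real N ^ n"
    using assms(1) by (simp add: power_divide field_simps)
  also have "\<dots> \<le> \<epsilon> / 4" using assms by (simp add: field_simps)
  finally show ?thesis .
qed

lemma product_error_le:
  assumes "1 \<le> N" "0 \<le> \<epsilon>" "1 \<le> \<epsilon> * real N ^ n" "real n ^ 2 * L \<le> real N"
  shows "real N * real n * L * real n / 4^Suc ((n + 2) * N) \<le> \<epsilon> / 4"
proof -
  let ?k = "(n + 2) * N"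
  have "real N < real (2^N)" using less_exp[of N] by (simp only: of_nat_less_iff)
  moreover have "(2::real)^N \<le> 4^N" by (simp add: power_mono)
  ultimately have "real N ^ (n + 2) \<le> (4^N)^(n + 2)" by (intro power_mono) auto
  also have "\<dots> = 4^?k" by (metis power_mult mult.commute)
  finally have N4: "real N ^ (n + 2) \<le> 4^?k" .
  have "real N * real n * L * real n = real N * (real n ^ 2 * L)" by (simp add: power2_eq_square)
  also have "\<dots> \<le> real N * real N" using assms(4) by (intro mult_left_mono) auto
  also have "\<dots> \<le> real N * real N * (\<epsilon> * real N ^ n)"
    using mult_left_mono[OF assms(3), of "real N * real N"] by simp
  also have "\<dots> = \<epsilon> * real N ^ (n + 2)" by (simp add: power_add power2_eq_square)
  also have "\<dots> \<le> \<epsilon> * 4^?k" using N4 assms(2) by (rule mult_left_mono)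
  finally have "real N * real n * L * real n / 4^Suc ?k \<le> \<epsilon> * 4^?k / 4^Suc ?k"
    by (intro divide_right_mono) auto
  then show ?thesis by simp
qed

lemma pass_value_approximation:
  assumes tay: "taylor_bounds D n L R g c" and "0 < D" "0 < \<epsilon>" "0 \<le> R" "0 \<le> L"
    and N: "1 \<le> N" "4 * R * (2 * D)^Suc n \<le> \<epsilon> * real N ^ n" "1 \<le> \<epsilon> * real N ^ n"
      "real n ^ 2 * L \<le> real N" "2 * D \<le> real N"
    and x: "-D \<le> x" "x \<le> D"
  defines "h \<equiv> 2 * D / real N"
  shows "\<bar>g x - (c 0 (-D) + pass_value ((n + 2) * N) n N (cell_coeffs c D h) ((x + D) / h))\<bar> \<le> \<epsilon> / 2"
proof -
  let ?T = "\<Sum>j<N. \<Sum>i<n. cell_coeffs c D h j (Suc i) * (min (relu ((x + D) / h - real j)) 1)^Suc i"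
  have h: "0 < h" "h \<le> 1" "real N * h = 2 * D" using N(1,5) \<open>0 < D\<close> by (auto simp: h_def)
  have "\<bar>g x - (c 0 (-D) + ?T)\<bar> \<le> real N * R * h^Suc n"
    using piecewise_taylor_error[OF tay \<open>0 < D\<close> _ \<open>0 \<le> R\<close> x meta_eq_to_obj_eq[OF h_def]] N(1)
    by simp
  also have "\<dots> \<le> \<epsilon> / 4" unfolding h_def using N(1,2) by (intro taylor_error_le) auto
  finally have taylor: "\<bar>g x - (c 0 (-D) + ?T)\<bar> \<le> \<epsilon> / 4" .
  have "\<bar>pass_value ((n + 2) * N) n N (cell_coeffs c D h) ((x + D) / h) - ?T\<bar>
      \<le> real N * real n * L * real n / 4^Suc ((n + 2) * N)"
    using cell_coeffs_bounded[OF tay h] \<open>0 \<le> L\<close> by (intro pass_value_error) auto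
  also have "\<dots> \<le> \<epsilon> / 4" using N(1,3,4) \<open>0 < \<epsilon>\<close> by (intro product_error_le) auto
  finally show ?thesis using taylor by linarith
qed

definition grid_const :: "nat \<Rightarrow> real \<Rightarrow> (nat \<Rightarrow> real) \<Rightarrow> real" where
  "grid_const n D lam = max 1 (4 * lam (Suc n) * (2 * D)^Suc n) + real n ^ 2 * lam n + 2 * D"

definition grid_size :: "nat \<Rightarrow> real \<Rightarrow> (nat \<Rightarrow> real) \<Rightarrow> real \<Rightarrow> nat" where
  "grid_size n D lam \<epsilon> = nat \<lceil>grid_const n D lam * \<epsilon> powr (-1 / real n)\<rceil>"

lemma grid_size_bounds:
  assumes "1 \<le> n" "0 < D" "\<forall>m. 0 < lam m" "0 < \<epsilon>" "\<epsilon> \<le> 1"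
  defines "N \<equiv> grid_size n D lam \<epsilon>"
  shows "1 \<le> N" "4 * lam (Suc n) * (2 * D)^Suc n \<le> \<epsilon> * real N ^ n" "1 \<le> \<epsilon> * real N ^ n"
    "real n ^ 2 * lam n + 2 * D \<le> real N" "real N \<le> (grid_const n D lam + 1) * \<epsilon> powr (-1 / real n)"
proof -
  define K where "K = grid_const n D lam"
  define E where "E = \<epsilon> powr (-1 / real n)"
  have "1 powr (-1 / real n) \<le> E" unfolding E_def using assms by (intro powr_mono2') auto
  then have E: "1 \<le> E" by simp
  have En: "E ^ n = 1 / \<epsilon>" using assms(1,4) by (simp add: E_def powr_power powr_neg_one divide_inverse)
  have "0 \<le> real n ^ 2 * lam n" using assms(3) by (simp add: less_imp_le)
  then have K: "max 1 (4 * lam (Suc n) * (2 * D)^Suc n) \<le> K" "real n ^ 2 * lam n + 2 * D \<le> K" "1 \<le> K"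
    using assms(2) by (auto simp: K_def grid_const_def)
  have "0 \<le> K * E" using K E by simp
  then have N: "K * E \<le> real N" "real N \<le> K * E + 1"
    by (simp_all add: N_def grid_size_def K_def E_def)
  have "1 \<le> K * E" using mult_mono[OF K(3) E] K(3) by simp
  then have "1 \<le> real N" using N(1) by linarith
  then show "1 \<le> N" by simp
  have "K \<le> K ^ n" using power_increasing[OF assms(1) K(3)] by simp
  also have "\<dots> = \<epsilon> * (K * E) ^ n" using En assms(4) by (simp add: power_mult_distrib)
  also have "\<dots> \<le> \<epsilon> * real N ^ n"
    using N(1) \<open>0 \<le> K * E\<close> assms(4) by (intro mult_left_mono power_mono) auto
  finally have KN: "K \<le> \<epsilon> * real N ^ n" .
  then show "4 * lam (Suc n) * (2 * D)^Suc n \<le> \<epsilon> * real N ^ n" "1 \<le> \<epsilon> * real N ^ n"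
    using K(1) by auto
  have "K \<le> K * E" using E K(3) by (simp add: mult_le_cancel_left1)
  then show "real n ^ 2 * lam n + 2 * D \<le> real N" using K(2) N(1) by linarith
  show "real N \<le> (grid_const n D lam + 1) * \<epsilon> powr (-1 / real n)"
    using N(2) E by (simp add: K_def E_def distrib_right)
qed

definition input_scale :: "real \<Rightarrow> real" where
  "input_scale D = 1 / max 1 D"

definition doublings :: "real \<Rightarrow> nat \<Rightarrow> nat" where
  "doublings D N = N + nat \<lceil>1 / (2 * min D 1)\<rceil>"

definition output_scale :: "real \<Rightarrow> nat \<Rightarrow> real" where
  "output_scale D N = real N / (2 * D * input_scale D * 2 ^ doublings D N)"

lemma scales_bounds:
  assumes "0 < D" "1 \<le> N"
  shows "0 < input_scale D" "input_scale D \<le> 1" "input_scale D * D \<le> 1"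
    "0 < output_scale D N" "output_scale D N \<le> 1"
    "output_scale D N * 2 ^ doublings D N * input_scale D * (x + D) = (x + D) / (2 * D / real N)"
proof -
  show c1: "0 < input_scale D" "input_scale D \<le> 1" "input_scale D * D \<le> 1"
    using assms(1) by (auto simp: input_scale_def field_simps)
  show "0 < output_scale D N" using assms c1 by (simp add: output_scale_def)
  show "output_scale D N * 2 ^ doublings D N * input_scale D * (x + D) = (x + D) / (2 * D / real N)"
    using assms c1 by (simp add: output_scale_def field_simps)
  have pow: "real k \<le> 2 ^ k" for k
  proof -
    have "real k < real (2 ^ k)" using less_exp[of k] by (simp only: of_nat_less_iff)
    then show ?thesis by simp
  qed
  define r0 where "r0 = nat \<lceil>1 / (2 * min D 1)\<rceil>"
  have "1 / (2 * min D 1) \<le> real r0" unfolding r0_def by linarith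
  then have "1 / (2 * min D 1) \<le> 2 ^ r0" using pow[of r0] by linarith
  then have "real N * (1 / (2 * min D 1)) \<le> 2 ^ N * 2 ^ r0"
    using pow[of N] assms(1) by (intro mult_mono) auto
  then have le: "real N \<le> 2 * min D 1 * (2 ^ N * 2 ^ r0)" using assms(1) by (simp add: field_simps)
  have "2 * D * input_scale D * 2 ^ doublings D N = 2 * (D * input_scale D) * 2 ^ doublings D N"
    by (simp only: mult.assoc)
  also have "D * input_scale D = min D 1" using assms(1) by (auto simp: input_scale_def min_def max_def)
  finally have "output_scale D N = real N / (2 * min D 1 * (2 ^ N * 2 ^ r0))"
    by (simp add: output_scale_def doublings_def r0_def[symmetric] power_add)
  then show "output_scale D N \<le> 1" using le assms(1) by simp
qed

definition depth_estimate :: "nat \<Rightarrow> real \<Rightarrow> nat \<Rightarrow> real" where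
  "depth_estimate n D N =
     real (1 + 2 * (2 + (n - 1) * (2 * n + 9))) * real N ^ 2 + real (nat \<lceil>1 / (2 * min D 1)\<rceil>) + 5"

lemma length_network_le_depth_estimate:
  assumes "1 \<le> N" "length cs \<le> 2"
  shows "real (length (approx_program (doublings D N) c ((n + 2) * N) n N cs) + 2) \<le> depth_estimate n D N"
proof -
  define Y where "Y = 2 + (n - 1) * (2 * n + 9)"
  define r0 where "r0 = nat \<lceil>1 / (2 * min D 1)\<rceil>"
  define Z where "Z = length cs * (1 + N * (2 + (n - 1) * (2 * ((n + 2) * N) + 5)))"
  define W where "W = N * (Y * N)"
  have "(n - 1) * (2 * ((n + 2) * N) + 5) \<le> (n - 1) * ((2 * n + 9) * N)"
    using assms(1) by (intro mult_le_mono2) (simp add: algebra_simps)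
  moreover have "2 * N + (n - 1) * ((2 * n + 9) * N) = Y * N" by (simp add: Y_def algebra_simps)
  ultimately have "1 + N * (2 + (n - 1) * (2 * ((n + 2) * N) + 5)) \<le> 1 + N * (Y * N)"
    using assms(1) by (intro add_left_mono mult_le_mono2) linarith
  then have "Z \<le> 2 + 2 * W"
    using assms(2) mult_le_mono[of "length cs" 2] by (fastforce simp: Z_def W_def)
  moreover have "length (approx_program (doublings D N) c ((n + 2) * N) n N cs) + 2 = N + r0 + 3 + Z"
    by (simp add: length_approx_program doublings_def r0_def Z_def)
  moreover have "(1 + 2 * Y) * (N * N) = N * N + 2 * W" by (simp add: W_def algebra_simps)
  moreover have "N \<le> N * N" using assms(1) by simp
  ultimately have "length (approx_program (doublings D N) c ((n + 2) * N) n N cs) + 2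
      \<le> (1 + 2 * Y) * (N * N) + r0 + 5"
    by linarith
  then have "real (length (approx_program (doublings D N) c ((n + 2) * N) n N cs) + 2)
      \<le> real ((1 + 2 * Y) * (N * N) + r0 + 5)"
    by (rule of_nat_mono)
  then show ?thesis
    unfolding depth_estimate_def Y_def[symmetric] r0_def[symmetric] power2_eq_square
    by (simp add: distrib_right)
qed

lemma approx_network:
  assumes "1 \<le> n" "0 < D" "1 \<le> N" "2 \<le> C" "length bs = length cs" "cs \<noteq> []" "length cs \<le> 2"
    and "\<forall>c\<in>set cs. \<forall>j<N. \<forall>i\<in>{1..n}. \<bar>c j i\<bar> \<le> C" "\<forall>b\<in>set bs. \<bar>b\<bar> \<le> C"
  defines "ls \<equiv> network (input_layer (input_scale D) D)
    (approx_program (doublings D N) (output_scale D N) ((n + 2) * N) n N cs) (readout bs)"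
  shows "\<exists>ds. in_NN (depth_estimate n D N) 13 1 (length cs) ds ls" "weights_bounded ls C"
    "\<And>x. -D \<le> x \<Longrightarrow> realize ls [x] =
       map (\<lambda>k. bs ! k + pass_value ((n + 2) * N) n N (cs ! k) ((x + D) / (2 * D / real N))) [0..<length bs]"
proof -
  note sc = scales_bounds[OF assms(2,3)]
  have prog: "\<forall>L\<in>set (approx_program (doublings D N) (output_scale D N) ((n + 2) * N) n N cs).
      layer_bounded C L"
    using sc assms(4) by (intro layer_bounded_approx_program assms(1,4,7,8)) auto
  have outs: "\<forall>nr\<in>set (readout bs). neuron_bounded C nr"
    using assms(4,5,7,9) by (intro neuron_bounded_readout) auto
  have "layer_bounded C (input_layer (input_scale D) D)"
    using sc assms(2,4) by (intro layer_bounded_input_layer) auto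
  then show "weights_bounded ls C"
    unfolding ls_def using prog outs assms(4) by (intro weights_bounded_network) auto
  have len: "readout bs \<noteq> []" "length (readout bs) = length cs" using assms(5,6) by (auto simp: readout_def)
  have "in_NN (depth_estimate n D N) 13 1 (length (readout bs)) (network_widths
      (approx_program (doublings D N) (output_scale D N) ((n + 2) * N) n N cs) (length (readout bs))) ls"
    unfolding ls_def using len assms(7) length_network_le_depth_estimate[OF assms(3,7)]
    by (intro in_NN_network) auto
  then show "\<exists>ds. in_NN (depth_estimate n D N) 13 1 (length cs) ds ls" using len(2) by auto
  show "realize ls [x] =
       map (\<lambda>k. bs ! k + pass_value ((n + 2) * N) n N (cs ! k) ((x + D) / (2 * D / real N))) [0..<length bs]"
    if "-D \<le> x" for x
    unfolding ls_def using realize_approx_network[OF prog outs assms(5,7,1)] sc that by simp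
qed

section \<open>The depth bound\<close>

lemma depth_bound_ge:
  fixes n :: nat
  defines "\<delta> \<equiv> 2 / (real n - 1) - 2 / real n"
  assumes n: "2 \<le> n" and "0 \<le> A" "0 \<le> B" and \<epsilon>: "0 < \<epsilon>" "\<epsilon> < 1"
    and small: "2 * (\<bar>ln D\<bar> + \<bar>ln (lam n)\<bar>) \<le> \<epsilon> powr (-1 / (real n - 1))" "2 * (A + B) \<le> \<epsilon> powr (-\<delta>)"
  shows "A * \<epsilon> powr (-2 / real n) + B \<le> depth_bound 1 n D lam \<epsilon>"
proof -
  define X where "X = \<epsilon> powr (-1 / (real n - 1))"
  define Z where "Z = \<epsilon> powr (-2 / real n)"
  have "1 < real n" using n by simp
  have X: "0 \<le> X" "X * X = \<epsilon> powr (-2 / (real n - 1))"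
    using \<epsilon>(1) by (simp_all add: X_def flip: powr_add)
  have split: "\<epsilon> powr (-2 / (real n - 1)) = Z * \<epsilon> powr (-\<delta>)"
    using \<epsilon>(1) by (simp add: Z_def \<delta>_def flip: powr_add)
  have "1 powr (-2 / real n) \<le> Z" unfolding Z_def using \<epsilon> \<open>1 < real n\<close> by (intro powr_mono2') auto
  then have Z: "1 \<le> Z" by simp
  have "- (\<bar>ln D\<bar> + \<bar>ln (lam n)\<bar>) \<le> ln D + ln (lam n)"
    using abs_ge_minus_self[of "ln D"] abs_ge_minus_self[of "ln (lam n)"] by linarith
  from mult_left_mono[OF this X(1)]
  have "- (X * (\<bar>ln D\<bar> + \<bar>ln (lam n)\<bar>)) \<le> X * ln D + X * ln (lam n)" by (simp add: algebra_simps)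
  moreover have "X * (\<bar>ln D\<bar> + \<bar>ln (lam n)\<bar>) \<le> X * (X / 2)"
    using small(1) X(1) by (intro mult_left_mono) (auto simp: X_def)
  then have "X * (\<bar>ln D\<bar> + \<bar>ln (lam n)\<bar>) \<le> X * X / 2" by simp
  moreover have "1 \<le> 2 / \<epsilon>" using \<epsilon> by (simp add: field_simps)
  then have "0 \<le> X * ln (2 / \<epsilon>)" using X(1) by simp
  moreover have "A * Z + B \<le> X * X / 2"
  proof -
    have "A * Z + B \<le> A * Z + B * Z" using mult_left_mono[OF Z \<open>0 \<le> B\<close>] by simp
    also have "\<dots> = Z * (A + B)" by (simp add: algebra_simps)
    also have "\<dots> \<le> Z * (\<epsilon> powr (-\<delta>) / 2)" using small(2) Z by (intro mult_left_mono) auto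
    also have "\<dots> = X * X / 2" using X(2) split by simp
    finally show ?thesis .
  qed
  ultimately have "A * Z + B \<le> X * X + X * ln (2 / \<epsilon>) + (X * ln D + X * ln (lam n))"
    by linarith
  then show ?thesis
    unfolding depth_bound_def X_def[symmetric] Z_def[symmetric] X(2)[symmetric] by (simp add: add.assoc)
qed

lemma eventually_le_powr_neg:
  fixes Q \<delta> :: real
  assumes "0 < \<delta>"
  shows "\<forall>\<^sub>F \<epsilon> in at_right 0. Q \<le> \<epsilon> powr (-\<delta>)"
proof -
  define M where "M = max Q 1"
  have "Q \<le> \<epsilon> powr (-\<delta>)" if "0 < \<epsilon>" "\<epsilon> < M powr (-1 / \<delta>)" for \<epsilon>
  proof -
    have "(M powr (-1 / \<delta>)) powr (-\<delta>) \<le> \<epsilon> powr (-\<delta>)" using that assms by (intro powr_mono2') auto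
    moreover have "(M powr (-1 / \<delta>)) powr (-\<delta>) = M" using assms by (simp add: M_def powr_powr)
    ultimately show ?thesis by (simp add: M_def)
  qed
  moreover have "0 < M powr (-1 / \<delta>)" by (simp add: M_def)
  ultimately show ?thesis unfolding eventually_at_right_field by blast
qed

lemma eventually_depth_bound:
  assumes "2 \<le> n" "0 \<le> A" "0 \<le> B"
  shows "\<forall>\<^sub>F \<epsilon> in at_right 0. A * \<epsilon> powr (-2 / real n) + B \<le> depth_bound 1 n D lam \<epsilon>"
proof -
  have "1 < real n" using assms(1) by simp
  then have "0 < 1 / (real n - 1)" "0 < 2 / (real n - 1) - 2 / real n" by (simp_all add: field_simps)
  then have "\<forall>\<^sub>F \<epsilon> in at_right 0. \<epsilon> \<in> {0<..<1} \<and>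
      2 * (\<bar>ln D\<bar> + \<bar>ln (lam n)\<bar>) \<le> \<epsilon> powr (-(1 / (real n - 1))) \<and>
      2 * (A + B) \<le> \<epsilon> powr (-(2 / (real n - 1) - 2 / real n))"
    by (intro eventually_conj eventually_at_right_real eventually_le_powr_neg) simp_all
  then show ?thesis
    by (rule eventually_mono) (use depth_bound_ge[OF assms] in auto)
qed

lemma eventually_depth_estimate:
  assumes "2 \<le> n" "0 < D" "\<forall>m. 0 < lam m"
  shows "\<forall>\<^sub>F \<epsilon> in at_right 0. \<epsilon> \<le> 1 \<and> depth_estimate n D (grid_size n D lam \<epsilon>) \<le> depth_bound 1 n D lam \<epsilon>"
proof -
  define A where "A = real (1 + 2 * (2 + (n - 1) * (2 * n + 9)))"
  define U where "U = grid_const n D lam + 1"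
  define r0 where "r0 = real (nat \<lceil>1 / (2 * min D 1)\<rceil>)"
  have "\<forall>\<^sub>F \<epsilon> in at_right 0.
      \<epsilon> \<in> {0<..<1} \<and> A * U^2 * \<epsilon> powr (-2 / real n) + (r0 + 5) \<le> depth_bound 1 n D lam \<epsilon>"
    by (intro eventually_conj eventually_at_right_real eventually_depth_bound assms(1))
      (simp_all add: A_def r0_def)
  then show ?thesis
  proof (rule eventually_mono)
    fix \<epsilon> assume \<epsilon>: "\<epsilon> \<in> {0<..<1} \<and> A * U^2 * \<epsilon> powr (-2 / real n) + (r0 + 5) \<le> depth_bound 1 n D lam \<epsilon>"
    then have "real (grid_size n D lam \<epsilon>) \<le> U * \<epsilon> powr (-1 / real n)"
      using grid_size_bounds(5)[of n D lam \<epsilon>] assms by (simp add: U_def)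
    then have "real (grid_size n D lam \<epsilon>) ^ 2 \<le> (U * \<epsilon> powr (-1 / real n))^2" by (simp add: power_mono)
    also have "\<dots> = U^2 * \<epsilon> powr (-2 / real n)"
      using \<epsilon> by (simp add: power_mult_distrib power2_eq_square flip: powr_add)
    finally have "A * real (grid_size n D lam \<epsilon>) ^ 2 \<le> A * (U^2 * \<epsilon> powr (-2 / real n))"
      by (rule mult_left_mono) (simp add: A_def)
    then have "depth_estimate n D (grid_size n D lam \<epsilon>) \<le> A * U^2 * \<epsilon> powr (-2 / real n) + (r0 + 5)"
      by (simp add: depth_estimate_def A_def r0_def mult.assoc)
    then show "\<epsilon> \<le> 1 \<and> depth_estimate n D (grid_size n D lam \<epsilon>) \<le> depth_bound 1 n D lam \<epsilon>"
      using \<epsilon> by auto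
  qed
qed

lemma in_NN_mono: "in_NN L M l0 lL ds ls \<Longrightarrow> L \<le> L' \<Longrightarrow> M \<le> M' \<Longrightarrow> in_NN L' M' l0 lL ds ls"
  by (auto simp: in_NN_def)

lemma taylor_network:
  fixes gcs :: "((real \<Rightarrow> real) \<times> (nat \<Rightarrow> real \<Rightarrow> real)) list"
  assumes "1 \<le> n" "0 < D" "0 < \<epsilon>" "0 \<le> R" "0 \<le> L" "gcs \<noteq> []" "length gcs \<le> 2"
    and tay: "\<forall>(g, c)\<in>set gcs. taylor_bounds D n L R g c"
    and N: "1 \<le> N" "4 * R * (2 * D)^Suc n \<le> \<epsilon> * real N ^ n" "1 \<le> \<epsilon> * real N ^ n"
      "real n ^ 2 * L \<le> real N" "2 * D \<le> real N"
  shows "\<exists>ds ls. in_NN (depth_estimate n D N) 13 1 (length gcs) ds ls \<and> weights_bounded ls (max 2 L) \<and>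
    (\<forall>x\<in>{-D..D}. list_all2 (\<lambda>(g, c) y. \<bar>g x - y\<bar> \<le> \<epsilon> / 2) gcs (realize ls [x]))"
proof -
  define h where "h = 2 * D / real N"
  define cs where "cs = map (\<lambda>(g, c). cell_coeffs c D h) gcs"
  define bs where "bs = map (\<lambda>(g, c). c 0 (-D)) gcs"
  define ls where "ls = network (input_layer (input_scale D) D)
    (approx_program (doublings D N) (output_scale D N) ((n + 2) * N) n N cs) (readout bs)"
  have h: "0 < h" "h \<le> 1" "real N * h = 2 * D" using N(1,5) assms(2) by (auto simp: h_def)
  have sizes: "2 \<le> max 2 L" "length bs = length cs" "cs \<noteq> []" "length cs \<le> 2"
    using assms(6,7) by (auto simp: bs_def cs_def)
  have coeffs: "\<forall>c\<in>set cs. \<forall>j<N. \<forall>i\<in>{1..n}. \<bar>c j i\<bar> \<le> max 2 L"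
    using tay cell_coeffs_bounded[OF _ h] by (fastforce simp: cs_def)
  have "\<forall>b\<in>set bs. \<bar>b\<bar> \<le> max 2 L"
    using tay assms(2) by (fastforce simp: bs_def taylor_bounds_def le_max_iff_disj)
  note net = approx_network[OF assms(1,2) N(1) sizes coeffs this, folded h_def ls_def]
  have pointwise: "\<bar>g x - (c 0 (-D) + pass_value ((n + 2) * N) n N (cell_coeffs c D h) ((x + D) / h))\<bar>
      \<le> \<epsilon> / 2" if "(g, c) \<in> set gcs" "x \<in> {-D..D}" for g c x
    using pass_value_approximation[OF _ assms(2,3,4,5) N, of g c x] tay that by (auto simp: h_def)
  have "list_all2 (\<lambda>(g, c) y. \<bar>g x - y\<bar> \<le> \<epsilon> / 2) gcs (realize ls [x])" if "x \<in> {-D..D}" for x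
  proof (rule list_all2_all_nthI)
    fix k assume "k < length gcs"
    moreover obtain g c where "gcs ! k = (g, c)" by force
    ultimately have "(g, c) \<in> set gcs" "gcs ! k = (g, c)" by (metis nth_mem)+
    then show "(\<lambda>(g, c) y. \<bar>g x - y\<bar> \<le> \<epsilon> / 2) (gcs ! k) (realize ls [x] ! k)"
      using net(3)[of x] that \<open>k < length gcs\<close> pointwise[of g c x] by (simp add: bs_def cs_def)
  qed (use net(3) that in \<open>simp add: bs_def\<close>)
  moreover obtain ds where "in_NN (depth_estimate n D N) 13 1 (length gcs) ds ls"
    using net(1) by (auto simp: cs_def)
  ultimately show ?thesis using net(2) by blast
qed

lemma approximating_network:
  fixes f :: "real \<Rightarrow> 'a::banach" and \<phi>s :: "('a \<Rightarrow> real) list"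
  assumes "1 \<le> n" "mono lam" "\<forall>m. 0 < lam m" "0 < D" "in_P lam D f" "0 < \<epsilon>" "\<epsilon> \<le> 1"
    and \<phi>s: "\<phi>s \<noteq> []" "length \<phi>s \<le> 2" "\<forall>\<phi>\<in>set \<phi>s. linear \<phi> \<and> (\<forall>y. \<bar>\<phi> y\<bar> \<le> norm y)"
  shows "\<exists>ds ls. in_NN (depth_estimate n D (grid_size n D lam \<epsilon>)) 13 1 (length \<phi>s) ds ls \<and>
    weights_bounded ls (max 2 (lam n)) \<and>
    (\<forall>x\<in>{-D<..<D}. list_all2 (\<lambda>\<phi> y. \<bar>\<phi> (f x) - y\<bar> \<le> \<epsilon> / 2) \<phi>s (realize ls [x]))"
proof -
  obtain F where F: "\<And>x. x \<in> {-D..D} \<Longrightarrow> F 0 x = f x"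
    "\<And>m x. x \<in> {-D..D} \<Longrightarrow> (F m has_vector_derivative F (Suc m) x) (at x within {-D..D})"
    "\<And>m x. x \<in> {-D..D} \<Longrightarrow> norm (F m x) \<le> lam m"
    using in_P_derivatives[OF assms(5,4)] by blast
  define gcs where "gcs = map (\<lambda>\<phi>. (\<lambda>x. \<phi> (f x), \<lambda>k a. \<phi> (F k a))) \<phi>s"
  have "\<forall>(g, c)\<in>set gcs. taylor_bounds D n (lam n) (lam (Suc n)) g c"
    using taylor_bounds_linear_image[OF F assms(2)] \<phi>s(3) assms(3) by (auto simp: gcs_def less_imp_le)
  moreover have "gcs \<noteq> []" "length gcs \<le> 2" using \<phi>s by (auto simp: gcs_def)
  moreover note grid = grid_size_bounds[OF assms(1,4,3,6,7)]
  moreover have "0 \<le> lam n" "0 \<le> lam (Suc n)" using assms(3) by (auto simp: less_imp_le)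
  moreover have "0 \<le> real n ^ 2 * lam n" using assms(3) by (simp add: less_imp_le)
  then have "real n ^ 2 * lam n \<le> real (grid_size n D lam \<epsilon>)" "2 * D \<le> real (grid_size n D lam \<epsilon>)"
    using grid(4) assms(4) by linarith+
  ultimately obtain ds ls where "in_NN (depth_estimate n D (grid_size n D lam \<epsilon>)) 13 1 (length gcs) ds ls"
    "weights_bounded ls (max 2 (lam n))"
    and err: "\<forall>x\<in>{-D..D}. list_all2 (\<lambda>(g, c) y. \<bar>g x - y\<bar> \<le> \<epsilon> / 2) gcs (realize ls [x])"
    using taylor_network[OF assms(1,4,6), of "lam (Suc n)" "lam n" gcs "grid_size n D lam \<epsilon>"] by auto
  moreover have "\<forall>x\<in>{-D<..<D}. list_all2 (\<lambda>\<phi> y. \<bar>\<phi> (f x) - y\<bar> \<le> \<epsilon> / 2) \<phi>s (realize ls [x])"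
    using err by (auto simp: gcs_def list_all2_map1)
  ultimately show ?thesis by (auto simp: gcs_def)
qed

lemma approximating_networks:
  fixes \<phi>s :: "('a::banach \<Rightarrow> real) list"
  assumes "2 \<le> n" "mono lam" "\<forall>m. 0 < lam m" "0 < D" "13 \<le> M"
    and "\<phi>s \<noteq> []" "length \<phi>s \<le> 2" "\<forall>\<phi>\<in>set \<phi>s. linear \<phi> \<and> (\<forall>y. \<bar>\<phi> y\<bar> \<le> norm y)"
  obtains \<epsilon>0 where "0 < \<epsilon>0" "\<And>(f :: real \<Rightarrow> 'a) \<epsilon>. in_P lam D f \<Longrightarrow> 0 < \<epsilon> \<Longrightarrow> \<epsilon> < \<epsilon>0 \<Longrightarrow>
    \<exists>ds ls. in_NN (depth_bound 1 n D lam \<epsilon>) M 1 (length \<phi>s) ds ls \<and> weights_bounded ls (max 2 (lam n)) \<and>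
       (\<forall>x\<in>{-D<..<D}. list_all2 (\<lambda>\<phi> y. \<bar>\<phi> (f x) - y\<bar> \<le> \<epsilon> / 2) \<phi>s (realize ls [x]))"
proof -
  obtain \<epsilon>0 where "0 < \<epsilon>0" and \<epsilon>0: "\<And>\<epsilon>. 0 < \<epsilon> \<Longrightarrow> \<epsilon> < \<epsilon>0 \<Longrightarrow>
      \<epsilon> \<le> 1 \<and> depth_estimate n D (grid_size n D lam \<epsilon>) \<le> depth_bound 1 n D lam \<epsilon>"
    using eventually_depth_estimate[OF assms(1,4,3)] unfolding eventually_at_right_field by blast
  have "1 \<le> n" using assms(1) by simp
  show ?thesis
  proof (rule that[OF \<open>0 < \<epsilon>0\<close>])
    fix f :: "real \<Rightarrow> 'a" and \<epsilon> :: real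
    assume "in_P lam D f" "0 < \<epsilon>" "\<epsilon> < \<epsilon>0"
    with \<epsilon>0 approximating_network[OF \<open>1 \<le> n\<close> assms(2,3,4) this(1,2) _ assms(6-8)] in_NN_mono assms(5)
    show "\<exists>ds ls. in_NN (depth_bound 1 n D lam \<epsilon>) M 1 (length \<phi>s) ds ls \<and> weights_bounded ls (max 2 (lam n)) \<and>
       (\<forall>x\<in>{-D<..<D}. list_all2 (\<lambda>\<phi> y. \<bar>\<phi> (f x) - y\<bar> \<le> \<epsilon> / 2) \<phi>s (realize ls [x]))"
      by (meson order.refl)
  qed
qed

lemma real_networks:
  assumes "2 \<le> n" "mono lam" "\<forall>m. 0 < lam m" "0 < D"
  shows "\<exists>\<epsilon>0>0. \<forall>(f :: real \<Rightarrow> real) \<epsilon>. in_P lam D f \<and> 0 < \<epsilon> \<and> \<epsilon> < \<epsilon>0 \<longrightarrow>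
    (\<exists>ds ls. in_NN (depth_bound 1 n D lam \<epsilon>) 13 1 1 ds ls \<and> weights_bounded ls (max 2 (lam n)) \<and>
       (\<forall>x\<in>{-D<..<D}. \<bar>f x - hd (realize ls [x])\<bar> \<le> \<epsilon>))"
proof -
  have "linear (\<lambda>y::real. y)" by (rule bounded_linear.linear[OF bounded_linear_ident])
  then obtain \<epsilon>0 where "0 < \<epsilon>0" and net: "\<And>(f :: real \<Rightarrow> real) \<epsilon>. in_P lam D f \<Longrightarrow> 0 < \<epsilon> \<Longrightarrow> \<epsilon> < \<epsilon>0 \<Longrightarrow>
    \<exists>ds ls. in_NN (depth_bound 1 n D lam \<epsilon>) 13 1 1 ds ls \<and> weights_bounded ls (max 2 (lam n)) \<and>
       (\<forall>x\<in>{-D<..<D}. list_all2 (\<lambda>\<phi> y. \<bar>\<phi> (f x) - y\<bar> \<le> \<epsilon> / 2) [\<lambda>y. y] (realize ls [x]))"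
    using approximating_networks[OF assms order.refl, of "[\<lambda>y. y]"] by auto
  have hd_error: "\<bar>z - hd ys\<bar> \<le> \<epsilon>"
    if "list_all2 (\<lambda>\<phi> y. \<bar>\<phi> z - y\<bar> \<le> \<epsilon> / 2) [\<lambda>y. y] ys" "0 < \<epsilon>" for z \<epsilon> :: real and ys
    using that by (auto simp: list_all2_Cons1)
  show ?thesis
  proof (intro exI[of _ \<epsilon>0] conjI allI impI)
    fix f :: "real \<Rightarrow> real" and \<epsilon> assume "in_P lam D f \<and> 0 < \<epsilon> \<and> \<epsilon> < \<epsilon>0"
    with net hd_error show "\<exists>ds ls. in_NN (depth_bound 1 n D lam \<epsilon>) 13 1 1 ds ls \<and>
        weights_bounded ls (max 2 (lam n)) \<and> (\<forall>x\<in>{-D<..<D}. \<bar>f x - hd (realize ls [x])\<bar> \<le> \<epsilon>)"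
      by blast
  qed fact
qed

lemma complex_networks:
  assumes "2 \<le> n" "mono lam" "\<forall>m. 0 < lam m" "0 < D"
  shows "\<exists>\<epsilon>0>0. \<forall>(f :: real \<Rightarrow> complex) \<epsilon>. in_P lam D f \<and> 0 < \<epsilon> \<and> \<epsilon> < \<epsilon>0 \<longrightarrow>
    (\<exists>ds ls. in_NN (depth_bound 1 n D lam \<epsilon>) 15 1 2 ds ls \<and> weights_bounded ls (max 2 (lam n)) \<and>
       (\<forall>x\<in>{-D<..<D}. cmod (f x - Complex (realize ls [x] ! 0) (realize ls [x] ! 1)) \<le> \<epsilon>))"
proof -
  have "linear Re" "linear Im"
    by (rule bounded_linear.linear[OF bounded_linear_Re] bounded_linear.linear[OF bounded_linear_Im])+
  then obtain \<epsilon>0 where "0 < \<epsilon>0" and net: "\<And>(f :: real \<Rightarrow> complex) \<epsilon>. in_P lam D f \<Longrightarrow> 0 < \<epsilon> \<Longrightarrow> \<epsilon> < \<epsilon>0 \<Longrightarrow>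
    \<exists>ds ls. in_NN (depth_bound 1 n D lam \<epsilon>) 15 1 2 ds ls \<and> weights_bounded ls (max 2 (lam n)) \<and>
       (\<forall>x\<in>{-D<..<D}. list_all2 (\<lambda>\<phi> y. \<bar>\<phi> (f x) - y\<bar> \<le> \<epsilon> / 2) [Re, Im] (realize ls [x]))"
    using approximating_networks[OF assms, of 15 "[Re, Im]"] abs_Re_le_cmod abs_Im_le_cmod
    by (auto simp: numeral_2_eq_2)
  have complex_error: "cmod (z - Complex (ys ! 0) (ys ! 1)) \<le> \<epsilon>"
    if "list_all2 (\<lambda>\<phi> y. \<bar>\<phi> z - y\<bar> \<le> \<epsilon> / 2) [Re, Im] ys" for z \<epsilon> ys
    using that cmod_le[of "z - Complex (ys ! 0) (ys ! 1)"] by (auto simp: list_all2_Cons1)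
  show ?thesis
  proof (intro exI[of _ \<epsilon>0] conjI allI impI)
    fix f :: "real \<Rightarrow> complex" and \<epsilon> assume "in_P lam D f \<and> 0 < \<epsilon> \<and> \<epsilon> < \<epsilon>0"
    with net complex_error show "\<exists>ds ls. in_NN (depth_bound 1 n D lam \<epsilon>) 15 1 2 ds ls \<and>
        weights_bounded ls (max 2 (lam n)) \<and>
        (\<forall>x\<in>{-D<..<D}. cmod (f x - Complex (realize ls [x] ! 0) (realize ls [x] ! 1)) \<le> \<epsilon>)"
      by blast
  qed fact
qed

lemma exists_constants_one:
  fixes Q :: "real \<Rightarrow> nat \<Rightarrow> (nat \<Rightarrow> real) \<Rightarrow> real \<Rightarrow> bool"
  assumes "\<And>n lam D. 2 \<le> n \<Longrightarrow> mono lam \<Longrightarrow> \<forall>m. 0 < lam m \<Longrightarrow> 0 < D \<Longrightarrow> Q 1 n lam D"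
  shows "\<exists>C>0. \<forall>n\<ge>2. \<exists>Ct>0. \<forall>lam D. mono lam \<and> (\<forall>m. 0 < lam m) \<and> 0 < D \<longrightarrow>
    (\<exists>B>0. B \<le> B_bound C Ct n D lam \<and> Q B n lam D)"
  using assms by (intro exI[of _ 1]) (auto simp: B_bound_def le_max_iff_disj intro!: exI[of _ 1])

theorem propositionA3:
  shows
  "(\<exists>C > 0. \<forall>n::nat \<ge> 2. \<exists>Ct > 0. \<forall>(lam :: nat \<Rightarrow> real) (D :: real).
      mono lam \<and> (\<forall>m. lam m > 0) \<and> D > 0 \<longrightarrow>
      (\<exists>B > 0. B \<le> B_bound C Ct n D lam \<and>
        (\<exists>\<epsilon>0 > 0. \<forall>(f :: real \<Rightarrow> real) \<epsilon>. in_P lam D f \<and> 0 < \<epsilon> \<and> \<epsilon> < \<epsilon>0 \<longrightarrow>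
           (\<exists>ds ls. in_NN (depth_bound B n D lam \<epsilon>) 13 1 1 ds ls \<and>
              weights_bounded ls (max 2 (lam n)) \<and>
              (\<forall>x \<in> {-D<..<D}. \<bar>f x - hd (realize ls [x])\<bar> \<le> \<epsilon>)))))
   \<and>
   (\<exists>C > 0. \<forall>n::nat \<ge> 2. \<exists>Ct > 0. \<forall>(lam :: nat \<Rightarrow> real) (D :: real).
      mono lam \<and> (\<forall>m. lam m > 0) \<and> D > 0 \<longrightarrow>
      (\<exists>B > 0. B \<le> B_bound C Ct n D lam \<and>
        (\<exists>\<epsilon>0 > 0. \<forall>(f :: real \<Rightarrow> complex) \<epsilon>. in_P lam D f \<and> 0 < \<epsilon> \<and> \<epsilon> < \<epsilon>0 \<longrightarrow>
           (\<exists>ds ls. in_NN (depth_bound B n D lam \<epsilon>) 15 1 2 ds ls \<and>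
              weights_bounded ls (max 2 (lam n)) \<and>
              (\<forall>x \<in> {-D<..<D}.
                 cmod (f x - Complex (realize ls [x] ! 0) (realize ls [x] ! 1)) \<le> \<epsilon>)))))"
  by (intro conjI exists_constants_one real_networks complex_networks)

end
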